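(* Let $\mathbb A_K^\cdot=\mathbb A_{K,f}\times\mathbb C^*$. The map $\Theta(\rho,s)=\rho s$ (product in $\mathbb A_K$, $\rho$ placed in the finite component) is well defined as a map $$\Theta:\hat{\mathcal O}\times_{\hat{\mathcal O}^*}(\mathbb A_K^*/K^* )\to\mathbb A_K^\cdot/K^*,$$ it is surjective, and two $K$-lattices have the same image under $\Theta$ if and only if they are commensurable. Hence $\Theta$ induces a bijection between commensurability classes of 1-dimensional $K$-lattices (not up to scaling) and $\mathbb A_K^\cdot/K^*$.
   Context: $K$ is an imaginary quadratic field with a fixed embedding $K\subset\mathbb C$, $\mathcal O$ its ring of integers, $\hat{\mathcal O}=\mathcal O\otimes\hat{\mathbb Z}$, $\mathbb A_{K,f}$ the finite adeles, $\mathbb A_K^*=\mathbb A_{K,f}^*\times\mathbb C^*$ the ideles with $K^*$ diagonally embedded. A $K$-lattice is a pair $(\Lambda,\phi)$ with $\Lambda\subset\mathbb C$ a finitely generated $\mathcal O$-submodule with $\Lambda\otimes_{\mathcal O}K\cong K$ and $\phi:K/\mathcal O\to K\Lambda/\Lambda$ an $\mathcal O$-module map; two are commensurable if $K\Lambda_1=K\Lambda_2$ and $\phi_1=\phi_2$ mod $\Lambda_1+\Lambda_2$. $K$-lattices are identified with $\hat{\mathcal O}\times_{\hat{\mathcal O}^*}(\mathbb A_K^*/K^* )$ (quotient by $(\rho,s)\mapsto(x^{-1}\rho,xs)$, $x\in\hat{\mathcal O}^*$) via $(\rho,s)\mapsto(\Lambda_s,\phi_{\rho,s})$, $\Lambda_s=s_\infty^{-1}(s_f\hat{\mathcal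 O}\cap K)$, $\phi_{\rho,s}(x)=s_\infty^{-1}[s_f\rho x]$ with $x\in K/\mathcal O\cong\mathbb A_{K,f}/\hat{\mathcal O}$ and $[\cdot]$ the class in $\mathbb A_{K,f}/s_f\hat{\mathcal O}\cong K/(s_f\hat{\mathcal O}\cap K)$. *)

theory Defs
  imports Complex_Main "HOL-Computational_Algebra.Polynomial"
begin

text \<open>K is given as a subset of the complex numbers (i.e. with its fixed embedding).
  It is an imaginary quadratic field iff K = Q(w) for some non-real w with w^2 rational.\<close>
definition imag_quadratic :: "complex set \<Rightarrow> bool" where
  "imag_quadratic K \<longleftrightarrow>
     (\<exists>w. Im w \<noteq> 0 \<and> w^2 \<in> \<rat> \<and> K = {a + b * w | a b. a \<in> \<rat> \<and> b \<in> \<rat>})"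

definition ring_of_integers :: "complex set \<Rightarrow> complex set" where
  "ring_of_integers K = {z \<in> K. algebraic_int z}"

definition scaleO :: "complex set \<Rightarrow> nat \<Rightarrow> complex set" where
  "scaleO K n = (\<lambda>z. of_nat n * z) ` ring_of_integers K"

text \<open>An element of O-hat is represented by a compatible system (a n) with a n in O,
  a m = a n mod nO whenever n divides m (indices n >= 1; the value at 0 is ignored).\<close>
type_synonym ohat = "nat \<Rightarrow> complex"

definition Ohat :: "complex set \<Rightarrow> ohat set" where
  "Ohat K = {a. (\<forall>n>0. a n \<in> ring_of_integers K) \<and>
                (\<forall>n>0. \<forall>m>0. n dvd m \<longrightarrow> a m - a n \<in> scaleO K n)}"

definition ohat_eq :: "complex set \<Rightarrow> ohat \<Rightarrow> ohat \<Rightarrow> bool" where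
  "ohat_eq K a b \<longleftrightarrow> (\<forall>n>0. a n - b n \<in> scaleO K n)"

definition Ohat_units :: "complex set \<Rightarrow> ohat set" where
  "Ohat_units K = {x \<in> Ohat K. \<exists>y \<in> Ohat K. ohat_eq K (\<lambda>n. x n * y n) (\<lambda>n. 1)}"

section \<open>Finite adeles A_{K,f} = O-hat tensor Q, represented as fractions a / D\<close>

type_synonym fadele = "nat \<times> ohat"

definition Af :: "complex set \<Rightarrow> fadele set" where
  "Af K = {(D, a). D > 0 \<and> a \<in> Ohat K}"

definition fa_eq :: "complex set \<Rightarrow> fadele \<Rightarrow> fadele \<Rightarrow> bool" where
  "fa_eq K x y \<longleftrightarrow>
     ohat_eq K (\<lambda>n. of_nat (fst y) * snd x n) (\<lambda>n. of_nat (fst x) * snd y n)"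

definition fa_add :: "fadele \<Rightarrow> fadele \<Rightarrow> fadele" where
  "fa_add x y = (fst x * fst y, \<lambda>n. of_nat (fst y) * snd x n + of_nat (fst x) * snd y n)"

definition fa_neg :: "fadele \<Rightarrow> fadele" where
  "fa_neg x = (fst x, \<lambda>n. - snd x n)"

definition fa_mult :: "fadele \<Rightarrow> fadele \<Rightarrow> fadele" where
  "fa_mult x y = (fst x * fst y, \<lambda>n. snd x n * snd y n)"

definition fa_of_ohat :: "ohat \<Rightarrow> fadele" where
  "fa_of_ohat a = (1, a)"

text \<open>K inside A_{K,f} (diagonal embedding): k = (d k) / d with d k in O.\<close>
definition fa_of_K :: "complex set \<Rightarrow> complex \<Rightarrow> fadele" where
  "fa_of_K K k = (let d = (LEAST d::nat. d > 0 \<and> of_nat d * k \<in> ring_of_integers K)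
                  in (d, \<lambda>n. of_nat d * k))"

definition Af_units :: "complex set \<Rightarrow> fadele set" where
  "Af_units K = {x \<in> Af K. \<exists>y \<in> Af K. fa_eq K (fa_mult x y) (1, \<lambda>n. 1)}"

definition in_sOhat :: "complex set \<Rightarrow> fadele \<Rightarrow> fadele \<Rightarrow> bool" where
  "in_sOhat K sf y \<longleftrightarrow> (\<exists>a \<in> Ohat K. fa_eq K y (fa_mult sf (fa_of_ohat a)))"

type_synonym adele = "fadele \<times> complex"

definition ideles :: "complex set \<Rightarrow> adele set" where
  "ideles K = {(u, z). u \<in> Af_units K \<and> z \<noteq> 0}"

definition Adot :: "complex set \<Rightarrow> adele set" where
  "Adot K = {(u, z). u \<in> Af K \<and> z \<noteq> 0}"

definition modK_eq :: "complex set \<Rightarrow> adele \<Rightarrow> adele \<Rightarrow> bool" where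
  "modK_eq K x y \<longleftrightarrow>
     (\<exists>k \<in> K - {0}. fa_eq K (fst y) (fa_mult (fa_of_K K k) (fst x)) \<and> snd y = k * snd x)"

section \<open>K-lattices as O-hat x_{O-hat^*} (A_K^*/K^*)\<close>

definition klat_eq :: "complex set \<Rightarrow> ohat \<times> adele \<Rightarrow> ohat \<times> adele \<Rightarrow> bool" where
  "klat_eq K p q \<longleftrightarrow>
     (\<exists>x \<in> Ohat K. \<exists>y \<in> Ohat K. ohat_eq K (\<lambda>n. x n * y n) (\<lambda>n. 1) \<and>
        ohat_eq K (fst q) (\<lambda>n. y n * fst p n) \<and>
        modK_eq K (fa_mult (fa_of_ohat x) (fst (snd p)), snd (snd p)) (snd q))"

definition Lambda :: "complex set \<Rightarrow> adele \<Rightarrow> complex set" where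
  "Lambda K s = (\<lambda>k. k / snd s) ` {k \<in> K. in_sOhat K (fst s) (fa_of_K K k)}"

text \<open>phi_rep K rho s x c: c in C represents phi_{rho,s}(x) in K Lambda_s / Lambda_s,
  i.e. c = s_inf^{-1} k with k in K and k = s_f rho x mod s_f O-hat.\<close>
definition phi_rep :: "complex set \<Rightarrow> ohat \<Rightarrow> adele \<Rightarrow> complex \<Rightarrow> complex \<Rightarrow> bool" where
  "phi_rep K \<rho> s x c \<longleftrightarrow>
     (\<exists>k \<in> K. c = k / snd s \<and>
        in_sOhat K (fst s)
          (fa_add (fa_of_K K k)
                  (fa_neg (fa_mult (fa_mult (fst s) (fa_of_ohat \<rho>)) (fa_of_K K x)))))"

definition Kspan :: "complex set \<Rightarrow> complex set \<Rightarrow> complex set" where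
  "Kspan K L = {k * l | k l. k \<in> K \<and> l \<in> L}"

definition setsum :: "complex set \<Rightarrow> complex set \<Rightarrow> complex set" where
  "setsum A B = {a + b | a b. a \<in> A \<and> b \<in> B}"

definition commensurable :: "complex set \<Rightarrow> ohat \<times> adele \<Rightarrow> ohat \<times> adele \<Rightarrow> bool" where
  "commensurable K p q \<longleftrightarrow>
     Kspan K (Lambda K (snd p)) = Kspan K (Lambda K (snd q)) \<and>
     (\<forall>x \<in> K. \<forall>c1 c2. phi_rep K (fst p) (snd p) x c1 \<longrightarrow> phi_rep K (fst q) (snd q) x c2 \<longrightarrow>
        c1 - c2 \<in> setsum (Lambda K (snd p)) (Lambda K (snd q)))"

definition Theta :: "ohat \<times> adele \<Rightarrow> adele" where
  "Theta p = (fa_mult (fa_of_ohat (fst p)) (fst (snd p)), snd (snd p))"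

definition klattices :: "complex set \<Rightarrow> (ohat \<times> adele) set" where
  "klattices K = Ohat K \<times> ideles K"

end

theory Submission
  imports Defs "Jordan_Normal_Form.Char_Poly"
begin

text \<open>
  Multiplying \<open>\<rho>\<close> by a unit \<open>x\<^sup>-\<^sup>1\<close> and \<open>s\<close> by \<open>x\<close> does not change \<open>\<rho> s\<close>, and every
  \<open>(a / D, z)\<close> is \<open>\<Theta>(a, (1 / D, z))\<close>. For commensurability, note \<open>K \<Lambda>\<^sub>s = K s\<^sub>\<infinity>\<^sup>-\<^sup>1\<close>,
  so equal \<open>K\<close>-spans mean \<open>s'\<^sub>\<infinity> = \<kappa> s\<^sub>\<infinity>\<close> with \<open>\<kappa> \<in> K\<^sup>*\<close>. If moreover
  \<open>\<rho>' s'\<^sub>f = \<kappa> \<rho> s\<^sub>f\<close>, two values of \<open>\<phi>(x)\<close> differ by an element of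
  \<open>\<kappa> s\<^sub>f Ohat + s'\<^sub>f Ohat\<close>, and strong approximation (\<open>K\<close> is dense in the finite adeles)
  splits it into elements of \<open>\<kappa> \<Lambda>\<^sub>s\<close> and \<open>\<Lambda>\<^sub>s\<^sub>'\<close>. Conversely, commensurability puts
  \<open>(\<kappa> \<rho> s\<^sub>f - \<rho>' s'\<^sub>f) x\<close> into that lattice for every \<open>x \<in> K\<close>; its denominators are
  bounded, so taking \<open>x = 1 / m\<close> for all \<open>m\<close> forces \<open>\<kappa> \<rho> s\<^sub>f = \<rho>' s'\<^sub>f\<close>.
  That the ring of integers is a ring rests on sums and products of algebraic integers
  being eigenvalues of integer matrices.
\<close>

section \<open>Sums and products of algebraic integers\<close>

lemma algebraic_int_eigenvalue:
  fixes A :: "nat \<Rightarrow> nat \<Rightarrow> int" and v :: "nat \<Rightarrow> 'a :: field_char_0"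
  assumes "N > 0" and "v 0 \<noteq> 0"
    and eigen: "\<And>r. r < N \<Longrightarrow> (\<Sum>s<N. of_int (A r s) * v s) = z * v r"
  shows "algebraic_int z"
proof -
  define M :: "int mat" where "M = mat N N (\<lambda>(r,s). A r s)"
  define M' :: "'a mat" where "M' = map_mat of_int M"
  have M: "M \<in> carrier_mat N N" and M': "M' \<in> carrier_mat N N"
    unfolding M'_def M_def by auto
  have "eigenvector M' (vec N v) z"
    unfolding eigenvector_def
  proof (intro conjI)
    show "vec N v \<in> carrier_vec (dim_row M')"
      using M' by auto
    show "vec N v \<noteq> 0\<^sub>v (dim_row M')"
    proof
      assume "vec N v = 0\<^sub>v (dim_row M')"
      hence "vec N v $ 0 = 0" using M' \<open>N > 0\<close> by auto
      thus False using assms(1,2) by auto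
    qed
    show "M' *\<^sub>v vec N v = z \<cdot>\<^sub>v vec N v"
    proof (rule eq_vecI)
      fix r assume "r < dim_vec (z \<cdot>\<^sub>v vec N v)"
      hence r: "r < N" by simp
      have "(M' *\<^sub>v vec N v) $ r = (\<Sum>s\<in>{0..<N}. M' $$ (r,s) * v s)"
        using r M' by (auto simp: scalar_prod_def)
      also have "\<dots> = (\<Sum>s<N. of_int (A r s) * v s)"
        using r by (intro sum.cong) (auto simp: M'_def M_def)
      finally show "(M' *\<^sub>v vec N v) $ r = (z \<cdot>\<^sub>v vec N v) $ r"
        using eigen[OF r] r by simp
    qed (simp add: M'_def M_def)
  qed
  hence "poly (char_poly M') z = 0"
    using eigenvalue_root_char_poly[OF M'] unfolding eigenvalue_def by blast
  moreover have "char_poly M' = of_int_poly (char_poly M)"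
    unfolding M'_def by (rule of_int_hom.char_poly_hom[OF M])
  moreover have "lead_coeff (char_poly M) = 1"
    using degree_monic_char_poly[OF M] by simp
  ultimately show ?thesis
    unfolding algebraic_int_altdef_ipoly by metis
qed


lemma sum_lessThan_mult_div_mod:
  fixes f :: "nat \<Rightarrow> nat \<Rightarrow> 'a :: comm_monoid_add"
  assumes "m > 0"
  shows "(\<Sum>s<n*m. f (s div m) (s mod m)) = (\<Sum>k<n. \<Sum>l<m. f k l)"
proof -
  have "(\<Sum>k<n. \<Sum>l<m. f k l) = (\<Sum>(k,l)\<in>{..<n}\<times>{..<m}. f k l)"
    by (rule sum.cartesian_product)
  also have "\<dots> = (\<Sum>s<n*m. f (s div m) (s mod m))"
  proof (rule sum.reindex_bij_witness[where i = "\<lambda>s. (s div m, s mod m)" and j = "\<lambda>(k,l). k*m+l"])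
    fix a assume "a \<in> {..<n}\<times>{..<m}"
    then obtain k l where a: "a = (k,l)" "k < n" "l < m" by auto
    show "((case a of (k, l) \<Rightarrow> k * m + l) div m, (case a of (k, l) \<Rightarrow> k * m + l) mod m) = a"
      using a by auto
    have "k*m + l < (k+1)*m" using a by simp
    also have "\<dots> \<le> n*m" using a by (intro mult_right_mono) auto
    finally show "(case a of (k, l) \<Rightarrow> k * m + l) \<in> {..<n*m}" using a by simp
  next
    fix s assume "s \<in> {..<n*m}"
    thus "(s div m, s mod m) \<in> {..<n} \<times> {..<m}"
      using assms by (auto simp: less_mult_imp_div_less mult.commute)
  qed auto
  finally show ?thesis by simp
qed

text \<open>Row \<open>i\<close> of the transposed companion matrix of a monic \<open>p\<close>: multiplication by a root \<open>x\<close>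
  sends \<open>x\<^sup>i\<close> to \<open>x\<^sup>i\<^sup>+\<^sup>1\<close>, which for \<open>i + 1 = degree p\<close> is reduced using \<open>p(x) = 0\<close>.\<close>
definition companion_coeff :: "int poly \<Rightarrow> nat \<Rightarrow> nat \<Rightarrow> int" where
  "companion_coeff p i k = (if i + 1 < degree p then (if k = i + 1 then 1 else 0) else - coeff p k)"

lemma power_Suc_companion:
  fixes x :: "'a :: field_char_0"
  assumes root: "poly (of_int_poly p) x = 0" and monic: "lead_coeff p = 1" and i: "i < degree p"
  shows "x^(i+1) = (\<Sum>k<degree p. of_int (companion_coeff p i k) * x^k)"
proof (cases "i + 1 < degree p")
  case True
  have "(\<Sum>k<degree p. of_int (companion_coeff p i k) * x^k) = (\<Sum>k<degree p. if k = i + 1 then x^k else 0)"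
    using True by (intro sum.cong) (auto simp: companion_coeff_def)
  thus ?thesis using True by simp
next
  case False
  hence deg: "degree p = i + 1" using i by simp
  have "0 = (\<Sum>k\<le>degree p. of_int (coeff p k) * x^k)"
    using root by (simp add: poly_altdef degree_map_poly coeff_map_poly)
  also have "\<dots> = x^(i+1) + (\<Sum>k<degree p. of_int (coeff p k) * x^k)"
    using monic deg by (simp add: lessThan_Suc_atMost[symmetric])
  finally show ?thesis
    using False by (simp add: companion_coeff_def sum_negf eq_neg_iff_add_eq_0 add.commute)
qed

lemma algebraic_int_monic_poly:
  fixes x :: "'a :: field_char_0"
  assumes "algebraic_int x"
  obtains p :: "int poly" where "poly (of_int_poly p) x = 0" "lead_coeff p = 1" "degree p > 0"
proof -
  obtain p :: "int poly" where p: "poly (of_int_poly p) x = 0" "lead_coeff p = 1"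
    using assms unfolding algebraic_int_altdef_ipoly by blast
  have "degree p > 0"
  proof (rule ccontr)
    assume "\<not> degree p > 0"
    hence "p = 1" using p(2) by (metis gr0I monic_degree_0)
    thus False using p(1) by simp
  qed
  thus ?thesis using p that by blast
qed

text \<open>Both closure proofs exhibit \<open>x y\<close> resp. \<open>x + y\<close> as an eigenvalue of an integer matrix acting
  on the vector of monomials \<open>x\<^sup>i y\<^sup>j\<close> (\<open>i < degree p\<close>, \<open>j < degree q\<close>), indexed by \<open>i * degree q + j\<close>.\<close>

lemma algebraic_int_times:
  fixes x y :: "'a :: field_char_0"
  assumes "algebraic_int x" "algebraic_int y"
  shows "algebraic_int (x * y)"
proof -
  obtain p where p: "poly (of_int_poly p) x = 0" "lead_coeff p = 1" "degree p > 0"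
    using algebraic_int_monic_poly[OF assms(1)] by blast
  obtain q where q: "poly (of_int_poly q) y = 0" "lead_coeff q = 1" "degree q > 0"
    using algebraic_int_monic_poly[OF assms(2)] by blast
  define n m where "n = degree p" and "m = degree q"
  define v where "v = (\<lambda>r. x^(r div m) * y^(r mod m))"
  show ?thesis
  proof (rule algebraic_int_eigenvalue[where N = "n*m" and v = v and
        A = "\<lambda>r s. companion_coeff p (r div m) (s div m) * companion_coeff q (r mod m) (s mod m)"])
    show "n*m > 0" "v 0 \<noteq> 0" using p q by (simp_all add: n_def m_def v_def)
    fix r assume r: "r < n*m"
    define i j where "i = r div m" and "j = r mod m"
    have ij: "i < n" "j < m" using r p q unfolding i_def j_def n_def m_def by (auto simp: less_mult_imp_div_less)
    have "(\<Sum>s<n*m. of_int (companion_coeff p i (s div m) * companion_coeff q j (s mod m)) * v s) =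
        (\<Sum>k<n. \<Sum>l<m. of_int (companion_coeff p i k) * x^k * (of_int (companion_coeff q j l) * y^l))"
      using sum_lessThan_mult_div_mod[of m "\<lambda>k l. of_int (companion_coeff p i k) * x^k * (of_int (companion_coeff q j l) * y^l)" n] q
      by (simp add: v_def n_def m_def algebra_simps)
    also have "\<dots> = x^(i+1) * y^(j+1)"
      using power_Suc_companion[OF p(1,2), of i] power_Suc_companion[OF q(1,2), of j] ij
      by (simp add: n_def m_def sum_product)
    finally show "(\<Sum>s<n*m. of_int (companion_coeff p (r div m) (s div m) * companion_coeff q (r mod m) (s mod m)) * v s) = x * y * v r"
      by (simp add: v_def i_def j_def algebra_simps)
  qed
qed

lemma algebraic_int_plus:
  fixes x y :: "'a :: field_char_0"
  assumes "algebraic_int x" "algebraic_int y"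
  shows "algebraic_int (x + y)"
proof -
  obtain p where p: "poly (of_int_poly p) x = 0" "lead_coeff p = 1" "degree p > 0"
    using algebraic_int_monic_poly[OF assms(1)] by blast
  obtain q where q: "poly (of_int_poly q) y = 0" "lead_coeff q = 1" "degree q > 0"
    using algebraic_int_monic_poly[OF assms(2)] by blast
  define n m where "n = degree p" and "m = degree q"
  define v where "v = (\<lambda>r. x^(r div m) * y^(r mod m))"
  define A where "A = (\<lambda>r s. companion_coeff p (r div m) (s div m) * of_bool (r mod m = s mod m)
     + of_bool (r div m = s div m) * companion_coeff q (r mod m) (s mod m))"
  show ?thesis
  proof (rule algebraic_int_eigenvalue[where N = "n*m" and v = v and A = A])
    show "n*m > 0" "v 0 \<noteq> 0" using p q by (simp_all add: n_def m_def v_def)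
    fix r assume r: "r < n*m"
    define i j where "i = r div m" and "j = r mod m"
    have ij: "i < n" "j < m" using r p q unfolding i_def j_def n_def m_def by (auto simp: less_mult_imp_div_less)
    have "(\<Sum>s<n*m. of_int (A r s) * v s) =
        (\<Sum>s<n*m. (\<lambda>k l. (if l = j then of_int (companion_coeff p i k) * x^k * y^l else 0)
            + (if k = i then x^k * (of_int (companion_coeff q j l) * y^l) else 0)) (s div m) (s mod m))"
      by (intro sum.cong) (auto simp: A_def v_def i_def j_def algebra_simps)
    also have "\<dots> = (\<Sum>k<n. \<Sum>l<m. (if l = j then of_int (companion_coeff p i k) * x^k * y^l else 0)
            + (if k = i then x^k * (of_int (companion_coeff q j l) * y^l) else 0))"
      using q by (intro sum_lessThan_mult_div_mod) (simp add: m_def)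
    also have "\<dots> = (\<Sum>k<n. of_int (companion_coeff p i k) * x^k * y^j)
                    + x^i * (\<Sum>l<m. of_int (companion_coeff q j l) * y^l)"
    proof -
      have "(\<Sum>l<m. if l = j then of_int (companion_coeff p i k) * x^k * y^l else 0)
          = of_int (companion_coeff p i k) * x^k * y^j" for k
        using ij by (simp add: sum.delta)
      moreover have "(\<Sum>l<m. if k = i then x^k * (of_int (companion_coeff q j l) * y^l) else 0)
          = (if k = i then x^i * (\<Sum>l<m. of_int (companion_coeff q j l) * y^l) else 0)" for k
        by (simp add: sum_distrib_left)
      ultimately show ?thesis using ij by (simp add: sum.distrib)
    qed
    also have "\<dots> = x^(i+1) * y^j + x^i * y^(j+1)"
      using power_Suc_companion[OF p(1,2), of i] power_Suc_companion[OF q(1,2), of j] ij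
      by (simp add: n_def m_def sum_distrib_right)
    also have "\<dots> = (x + y) * v r"
      by (simp add: v_def i_def j_def algebra_simps)
    finally show "(\<Sum>s<n*m. of_int (A r s) * v s) = (x + y) * v r" .
  qed
qed

section \<open>The field \<open>K\<close>, its integers and \<open>Ohat\<close>\<close>

locale imag_quadratic_field =
  fixes K :: "complex set" and \<omega> :: complex
  assumes Im_generator: "Im \<omega> \<noteq> 0" and generator_square: "\<omega>^2 \<in> \<rat>"
    and K_eq: "K = {a + b * \<omega> | a b. a \<in> \<rat> \<and> b \<in> \<rat>}"
begin

abbreviation \<O> :: "complex set" where "\<O> \<equiv> ring_of_integers K"

lemma K_cases:
  assumes "x \<in> K" obtains a b where "a \<in> \<rat>" "b \<in> \<rat>" "x = a + b * \<omega>"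
  using assms K_eq by blast

lemma K_memI: "a \<in> \<rat> \<Longrightarrow> b \<in> \<rat> \<Longrightarrow> a + b * \<omega> \<in> K"
  using K_eq by blast

lemma K_add: "x \<in> K \<Longrightarrow> y \<in> K \<Longrightarrow> x + y \<in> K"
proof -
  assume "x \<in> K" "y \<in> K"
  then obtain a b c d where "a \<in> \<rat>" "b \<in> \<rat>" "x = a + b * \<omega>" "c \<in> \<rat>" "d \<in> \<rat>" "y = c + d * \<omega>"
    by (metis K_cases)
  thus ?thesis using K_memI[of "a + c" "b + d"] by (simp add: algebra_simps)
qed

lemma K_minus: "x \<in> K \<Longrightarrow> - x \<in> K"
proof -
  assume "x \<in> K"
  then obtain a b where "a \<in> \<rat>" "b \<in> \<rat>" "x = a + b * \<omega>" by (metis K_cases)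
  thus ?thesis using K_memI[of "- a" "- b"] by (simp add: algebra_simps)
qed

lemma K_diff: "x \<in> K \<Longrightarrow> y \<in> K \<Longrightarrow> x - y \<in> K"
  using K_add[of x "- y"] K_minus[of y] by simp

lemma K_mult: "x \<in> K \<Longrightarrow> y \<in> K \<Longrightarrow> x * y \<in> K"
proof -
  assume "x \<in> K" "y \<in> K"
  then obtain a b c d where "a \<in> \<rat>" "b \<in> \<rat>" "x = a + b * \<omega>" "c \<in> \<rat>" "d \<in> \<rat>" "y = c + d * \<omega>"
    by (metis K_cases)
  moreover have "x * y = (a*c + b*d*\<omega>^2) + (a*d + b*c) * \<omega>"
    using calculation by (simp add: algebra_simps power2_eq_square)
  ultimately show ?thesis using K_memI[of "a*c + b*d*\<omega>^2" "a*d + b*c"] generator_square by simp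
qed

lemma Rats_subset_K: "q \<in> \<rat> \<Longrightarrow> q \<in> K"
  using K_memI[of q 0] by simp

lemma K_of_nat [simp]: "of_nat n \<in> K"
  by (simp add: Rats_subset_K)

text \<open>The inverse is computed with the conjugate \<open>a - b \<omega>\<close>; the norm \<open>a\<^sup>2 - b\<^sup>2 \<omega>\<^sup>2\<close> does not
  vanish because \<open>\<omega>\<close> is not real.\<close>
lemma K_inverse: "x \<in> K \<Longrightarrow> inverse x \<in> K"
proof -
  assume "x \<in> K"
  then obtain a b where ab: "a \<in> \<rat>" "b \<in> \<rat>" "x = a + b * \<omega>" by (metis K_cases)
  show ?thesis
  proof (cases "x = 0")
    case True thus ?thesis by (simp add: Rats_subset_K)
  next
    case False
    define N where "N = a^2 - b^2 * \<omega>^2"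
    have N: "N \<noteq> 0"
    proof
      assume N0: "N = 0"
      show False
      proof (cases "b = 0")
        case True thus False using N0 False ab unfolding N_def by simp
      next
        case b: False
        have "\<omega>^2 = (a/b)^2" using N0 b unfolding N_def by (simp add: field_simps)
        hence "\<omega> = a/b \<or> \<omega> = -(a/b)" by (simp add: power2_eq_iff)
        moreover have "Im (a/b) = 0" using ab by (auto elim!: Rats_cases')
        ultimately show False using Im_generator by auto
      qed
    qed
    have "x * (a - b * \<omega>) = N" unfolding N_def ab(3) by (simp add: algebra_simps power2_eq_square)
    hence "inverse x = a / N + (- b / N) * \<omega>" using N False
      by (simp add: field_simps)
    moreover have "N \<in> \<rat>" unfolding N_def using ab generator_square by simp
    ultimately show ?thesis using K_memI[of "a/N" "-b/N"] ab by simp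
  qed
qed

lemma K_divide: "x \<in> K \<Longrightarrow> y \<in> K \<Longrightarrow> x / y \<in> K"
  using K_mult[of x "inverse y"] K_inverse[of y] by (simp add: divide_inverse)

lemma ring_of_integers_subset: "x \<in> \<O> \<Longrightarrow> x \<in> K"
  by (simp add: ring_of_integers_def)

lemma ring_of_integers_add: "x \<in> \<O> \<Longrightarrow> y \<in> \<O> \<Longrightarrow> x + y \<in> \<O>"
  by (auto simp: ring_of_integers_def K_add algebraic_int_plus)

lemma ring_of_integers_mult: "x \<in> \<O> \<Longrightarrow> y \<in> \<O> \<Longrightarrow> x * y \<in> \<O>"
  by (auto simp: ring_of_integers_def K_mult algebraic_int_times)

lemma ring_of_integers_minus: "x \<in> \<O> \<Longrightarrow> - x \<in> \<O>"
  by (auto simp: ring_of_integers_def K_minus)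

lemma ring_of_integers_diff: "x \<in> \<O> \<Longrightarrow> y \<in> \<O> \<Longrightarrow> x - y \<in> \<O>"
  using ring_of_integers_add[of x "- y"] ring_of_integers_minus[of y] by simp

lemma of_nat_in_ring_of_integers [simp]: "of_nat n \<in> \<O>"
  and zero_in_ring_of_integers [simp]: "0 \<in> \<O>"
  and one_in_ring_of_integers [simp]: "1 \<in> \<O>"
  by (auto simp: ring_of_integers_def Rats_subset_K)

lemma Rats_denominator:
  assumes "(q :: complex) \<in> \<rat>" obtains d :: nat where "d > 0" "of_nat d * q \<in> \<int>"
proof -
  from assms obtain a b where ab: "b > 0" "q = of_int a / of_int b" by (auto elim: Rats_cases')
  hence "of_nat (nat b) * q = of_int a" by simp
  thus ?thesis using that[of "nat b"] ab by auto
qed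

lemma K_denominator:
  assumes "x \<in> K" obtains d :: nat where "d > 0" "of_nat d * x \<in> \<O>"
proof -
  obtain a b where ab: "a \<in> \<rat>" "b \<in> \<rat>" "x = a + b * \<omega>" using assms by (rule K_cases)
  obtain d1 where d1: "d1 > 0" "of_nat d1 * a \<in> \<int>" using Rats_denominator[OF ab(1)] .
  obtain d2 where d2: "d2 > 0" "of_nat d2 * b \<in> \<int>" using Rats_denominator[OF ab(2)] .
  obtain d3 where d3: "d3 > 0" "of_nat d3 * \<omega>^2 \<in> \<int>" using Rats_denominator[OF generator_square] .
  define d where "d = d1 * d2 * d3"
  have "of_nat d * a = of_nat (d2 * d3) * (of_nat d1 * a)" unfolding d_def by (simp add: algebra_simps)
  also have "\<dots> \<in> \<int>" using d1 by simp
  finally have A: "algebraic_int (of_nat d * a)" by (rule int_imp_algebraic_int)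
  have "(of_nat d * b * \<omega>)^2 = (of_nat d2 * b)^2 * of_nat (d1*d1*d3) * (of_nat d3 * \<omega>^2)"
    unfolding d_def by (simp add: algebra_simps power2_eq_square)
  also have "\<dots> \<in> \<int>" using d2 d3 by simp
  finally have "algebraic_int ((of_nat d * b * \<omega>)^2)" by (rule int_imp_algebraic_int)
  hence B: "algebraic_int (of_nat d * b * \<omega>)"
    by (rule algebraic_int_root[where p = "monom 1 2"]) (auto simp: poly_monom degree_monom_eq)
  have "of_nat d * x = of_nat d * a + of_nat d * b * \<omega>" by (simp add: ab algebra_simps)
  hence "algebraic_int (of_nat d * x)" using algebraic_int_plus[OF A B] by simp
  moreover have "of_nat d * x \<in> K" using assms by (simp add: K_mult)
  moreover have "d > 0" using d1 d2 d3 by (simp add: d_def)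
  ultimately show ?thesis using that by (auto simp: ring_of_integers_def)
qed

lemma scaleO_iff: "n > 0 \<Longrightarrow> z \<in> scaleO K n \<longleftrightarrow> z / of_nat n \<in> \<O>"
  unfolding scaleO_def image_iff
  by (metis nonzero_mult_div_cancel_left nonzero_eq_divide_eq of_nat_eq_0_iff not_gr0)

lemma zero_in_scaleO [simp]: "0 \<in> scaleO K n"
  unfolding scaleO_def by (auto simp: image_iff intro!: bexI[of _ 0])

lemma scaleO_add: "n > 0 \<Longrightarrow> x \<in> scaleO K n \<Longrightarrow> y \<in> scaleO K n \<Longrightarrow> x + y \<in> scaleO K n"
  by (simp add: scaleO_iff add_divide_distrib ring_of_integers_add)

lemma scaleO_minus: "n > 0 \<Longrightarrow> x \<in> scaleO K n \<Longrightarrow> - x \<in> scaleO K n"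
  by (simp add: scaleO_iff ring_of_integers_minus)

lemma scaleO_diff: "n > 0 \<Longrightarrow> x \<in> scaleO K n \<Longrightarrow> y \<in> scaleO K n \<Longrightarrow> x - y \<in> scaleO K n"
  by (simp add: scaleO_iff diff_divide_distrib ring_of_integers_diff)

lemma scaleO_mult: "n > 0 \<Longrightarrow> c \<in> \<O> \<Longrightarrow> x \<in> scaleO K n \<Longrightarrow> c * x \<in> scaleO K n"
  using ring_of_integers_mult[of c "x / of_nat n"] by (simp add: scaleO_iff)

lemma of_nat_mult_in_scaleO: "n > 0 \<Longrightarrow> c \<in> \<O> \<Longrightarrow> of_nat n * c \<in> scaleO K n"
  by (simp add: scaleO_iff)

lemma scaleO_cancel: "n > 0 \<Longrightarrow> d > 0 \<Longrightarrow> of_nat d * x \<in> scaleO K (d * n) \<Longrightarrow> x \<in> scaleO K n"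
  by (simp add: scaleO_iff)

lemma OhatI:
  "(\<And>n. n > 0 \<Longrightarrow> a n \<in> \<O>) \<Longrightarrow> (\<And>n m. n > 0 \<Longrightarrow> m > 0 \<Longrightarrow> n dvd m \<Longrightarrow> a m - a n \<in> scaleO K n)
   \<Longrightarrow> a \<in> Ohat K"
  unfolding Ohat_def by blast

lemma Ohat_in_ring_of_integers: "a \<in> Ohat K \<Longrightarrow> n > 0 \<Longrightarrow> a n \<in> \<O>"
  unfolding Ohat_def by blast

lemma Ohat_compatible: "a \<in> Ohat K \<Longrightarrow> n > 0 \<Longrightarrow> m > 0 \<Longrightarrow> n dvd m \<Longrightarrow> a m - a n \<in> scaleO K n"
  unfolding Ohat_def by blast

lemma Ohat_const: "c \<in> \<O> \<Longrightarrow> (\<lambda>n. c) \<in> Ohat K"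
  by (rule OhatI) auto

lemma Ohat_add: "a \<in> Ohat K \<Longrightarrow> b \<in> Ohat K \<Longrightarrow> (\<lambda>n. a n + b n) \<in> Ohat K"
proof (rule OhatI)
  fix n m :: nat assume *: "a \<in> Ohat K" "b \<in> Ohat K" "n > 0" "m > 0" "n dvd m"
  have "a m + b m - (a n + b n) = (a m - a n) + (b m - b n)" by simp
  thus "a m + b m - (a n + b n) \<in> scaleO K n" using * by (metis Ohat_compatible scaleO_add)
qed (auto intro: ring_of_integers_add Ohat_in_ring_of_integers)

lemma Ohat_minus: "a \<in> Ohat K \<Longrightarrow> (\<lambda>n. - a n) \<in> Ohat K"
proof (rule OhatI)
  fix n m :: nat assume *: "a \<in> Ohat K" "n > 0" "m > 0" "n dvd m"
  have "- a m - (- a n) = - (a m - a n)" by simp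
  thus "- a m - (- a n) \<in> scaleO K n" using * by (metis Ohat_compatible scaleO_minus)
qed (auto intro: ring_of_integers_minus Ohat_in_ring_of_integers)

lemma Ohat_diff: "a \<in> Ohat K \<Longrightarrow> b \<in> Ohat K \<Longrightarrow> (\<lambda>n. a n - b n) \<in> Ohat K"
  using Ohat_add[of a "\<lambda>n. - b n"] Ohat_minus[of b] by simp

lemma Ohat_mult: "a \<in> Ohat K \<Longrightarrow> b \<in> Ohat K \<Longrightarrow> (\<lambda>n. a n * b n) \<in> Ohat K"
proof (rule OhatI)
  fix n m :: nat assume *: "a \<in> Ohat K" "b \<in> Ohat K" "n > 0" "m > 0" "n dvd m"
  have "a m * b m - a n * b n = b m * (a m - a n) + a n * (b m - b n)" by (simp add: algebra_simps)
  thus "a m * b m - a n * b n \<in> scaleO K n" using *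
    by (metis Ohat_in_ring_of_integers Ohat_compatible scaleO_add scaleO_mult)
qed (auto intro: ring_of_integers_mult Ohat_in_ring_of_integers)

lemma Ohat_cmult: "c \<in> \<O> \<Longrightarrow> a \<in> Ohat K \<Longrightarrow> (\<lambda>n. c * a n) \<in> Ohat K"
  using Ohat_mult[OF Ohat_const] by blast

lemma Ohat_zero [simp]: "(\<lambda>n. 0) \<in> Ohat K" and Ohat_one [simp]: "(\<lambda>n. 1) \<in> Ohat K"
  by (auto intro: Ohat_const)

lemma ohat_eqI: "(\<And>n. n > 0 \<Longrightarrow> a n - b n \<in> scaleO K n) \<Longrightarrow> ohat_eq K a b"
  unfolding ohat_eq_def by blast

lemma ohat_eqD: "ohat_eq K a b \<Longrightarrow> n > 0 \<Longrightarrow> a n - b n \<in> scaleO K n"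
  unfolding ohat_eq_def by blast

lemma ohat_eq_pointwise: "(\<And>n. n > 0 \<Longrightarrow> a n = b n) \<Longrightarrow> ohat_eq K a b"
  by (rule ohat_eqI) simp

lemma ohat_eq_refl [simp]: "ohat_eq K a a"
  by (rule ohat_eq_pointwise) simp

lemma ohat_eq_sym: "ohat_eq K a b \<Longrightarrow> ohat_eq K b a"
  unfolding ohat_eq_def by (metis minus_diff_eq scaleO_minus)

lemma ohat_eq_add:
  "ohat_eq K a a' \<Longrightarrow> ohat_eq K b b' \<Longrightarrow> ohat_eq K (\<lambda>n. a n + b n) (\<lambda>n. a' n + b' n)"
  unfolding ohat_eq_def by (auto simp: add_diff_add scaleO_add)

lemma ohat_eq_cmult: "c \<in> \<O> \<Longrightarrow> ohat_eq K a a' \<Longrightarrow> ohat_eq K (\<lambda>n. c * a n) (\<lambda>n. c * a' n)"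
  unfolding ohat_eq_def by (metis right_diff_distrib scaleO_mult)

lemma ohat_eq_mult:
  assumes "a' \<in> Ohat K" "b \<in> Ohat K" "ohat_eq K a a'" "ohat_eq K b b'"
  shows "ohat_eq K (\<lambda>n. a n * b n) (\<lambda>n. a' n * b' n)"
proof (rule ohat_eqI)
  fix n :: nat assume n: "n > 0"
  have "a n * b n - a' n * b' n = b n * (a n - a' n) + a' n * (b n - b' n)" by (simp add: algebra_simps)
  thus "a n * b n - a' n * b' n \<in> scaleO K n"
    using assms n by (metis Ohat_in_ring_of_integers ohat_eqD scaleO_add scaleO_mult)
qed

lemma ohat_eq_iff_diff: "ohat_eq K a b \<longleftrightarrow> ohat_eq K (\<lambda>n. a n - b n) (\<lambda>n. 0)"
  unfolding ohat_eq_def by simp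

text \<open>\<open>Ohat K\<close> is torsion free: \<open>D a \<in> n \<O>\<close> at level \<open>D n\<close> gives \<open>a (D n) \<in> n \<O>\<close>, and \<open>a n \<equiv> a (D n)\<close>.\<close>
lemma ohat_eq_zero_cancel:
  assumes a: "a \<in> Ohat K" and D: "D > 0" and Da: "ohat_eq K (\<lambda>n. of_nat D * a n) (\<lambda>n. 0)"
  shows "ohat_eq K a (\<lambda>n. 0)"
proof (rule ohat_eqI)
  fix n :: nat assume n: "n > 0"
  have "of_nat D * a (D * n) \<in> scaleO K (D * n)" using ohat_eqD[OF Da, of "D*n"] n D by simp
  hence "a (D * n) \<in> scaleO K n" using scaleO_cancel n D by blast
  moreover have "a (D * n) - a n \<in> scaleO K n" using Ohat_compatible[OF a n, of "D*n"] n D by simp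
  ultimately have "a (D * n) - (a (D * n) - a n) \<in> scaleO K n" using scaleO_diff n by blast
  thus "a n - 0 \<in> scaleO K n" by simp
qed

lemma ohat_eq_cancel:
  assumes "a \<in> Ohat K" "b \<in> Ohat K" "D > 0" "ohat_eq K (\<lambda>n. of_nat D * a n) (\<lambda>n. of_nat D * b n)"
  shows "ohat_eq K a b"
proof -
  have "ohat_eq K (\<lambda>n. of_nat D * (a n - b n)) (\<lambda>n. 0)"
    using assms(4) unfolding ohat_eq_def by (simp add: algebra_simps)
  thus ?thesis
    using ohat_eq_zero_cancel[OF Ohat_diff[OF assms(1,2)] assms(3)] ohat_eq_iff_diff by blast
qed

lemma ohat_eq_zero_if_divisible:
  assumes "\<And>m. m > 0 \<Longrightarrow> \<exists>\<delta>\<in>Ohat K. ohat_eq K a (\<lambda>n. of_nat m * \<delta> n)"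
  shows "ohat_eq K a (\<lambda>n. 0)"
proof (rule ohat_eqI)
  fix n :: nat assume n: "n > 0"
  obtain \<delta> where \<delta>: "\<delta> \<in> Ohat K" "ohat_eq K a (\<lambda>k. of_nat n * \<delta> k)" using assms n by blast
  have "a n - of_nat n * \<delta> n \<in> scaleO K n" using ohat_eqD[OF \<delta>(2) n] by simp
  moreover have "of_nat n * \<delta> n \<in> scaleO K n"
    using of_nat_mult_in_scaleO[OF n Ohat_in_ring_of_integers[OF \<delta>(1) n]] .
  ultimately show "a n - 0 \<in> scaleO K n" using scaleO_add[OF n] by fastforce
qed

text \<open>The witnesses are \<open>c = a M\<close> and \<open>\<beta> n = (a (M n) - a M) / M\<close>.\<close>
lemma Ohat_decompose:
  assumes a: "a \<in> Ohat K" and M: "M > 0"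
  obtains c \<beta> where "c \<in> \<O>" "\<beta> \<in> Ohat K" "ohat_eq K a (\<lambda>n. c + of_nat M * \<beta> n)"
proof -
  define \<beta> where "\<beta> = (\<lambda>n. (a (M * n) - a M) / of_nat M)"
  have "\<beta> \<in> Ohat K"
  proof (rule OhatI)
    fix n :: nat assume n: "n > 0"
    have "a (M * n) - a M \<in> scaleO K M" using Ohat_compatible[OF a M, of "M*n"] n M by simp
    thus "\<beta> n \<in> \<O>" unfolding \<beta>_def using M by (simp add: scaleO_iff)
  next
    fix n m :: nat assume nm: "n > 0" "m > 0" "n dvd m"
    have "a (M * m) - a (M * n) \<in> scaleO K (M * n)"
      using Ohat_compatible[OF a, of "M*n" "M*m"] nm M by simp
    moreover have "\<beta> m - \<beta> n = (a (M * m) - a (M * n)) / of_nat M"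
      unfolding \<beta>_def using M by (simp add: field_simps)
    ultimately show "\<beta> m - \<beta> n \<in> scaleO K n" using M nm by (simp add: scaleO_iff)
  qed
  moreover have "ohat_eq K a (\<lambda>n. a M + of_nat M * \<beta> n)"
  proof (rule ohat_eqI)
    fix n :: nat assume n: "n > 0"
    have "a n - (a M + of_nat M * \<beta> n) = - (a (M * n) - a n)" unfolding \<beta>_def using M by simp
    moreover have "- (a (M * n) - a n) \<in> scaleO K n"
      using Ohat_compatible[OF a n, of "M*n"] n M scaleO_minus by (metis dvd_triv_right nat_0_less_mult_iff)
    ultimately show "a n - (a M + of_nat M * \<beta> n) \<in> scaleO K n" by metis
  qed
  ultimately show ?thesis using that Ohat_in_ring_of_integers[OF a M] by blast
qed

end

section \<open>Finite adeles\<close>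

abbreviation fa_zero :: fadele where "fa_zero \<equiv> (1, \<lambda>n. 0)"
abbreviation fa_one :: fadele where "fa_one \<equiv> (1, \<lambda>n. 1)"
abbreviation fa_diff :: "fadele \<Rightarrow> fadele \<Rightarrow> fadele" where "fa_diff x y \<equiv> fa_add x (fa_neg y)"

text \<open>The pair \<open>(D, a)\<close> stands for \<open>a / D\<close>, approximated at level \<open>n\<close> by the complex number
  \<open>a n / D\<close>. The ring operations act on these approximations pointwise, so an identity modulo
  \<open>fa_eq\<close> is proved by exhibiting the difference as a pointwise combination of null elements.\<close>
definition fa_val :: "fadele \<Rightarrow> nat \<Rightarrow> complex" where
  "fa_val x n = snd x n / of_nat (fst x)"

lemma fst_fa_ops [simp]:
  "fst (fa_mult x y) = fst x * fst y" "fst (fa_add x y) = fst x * fst y"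
  "fst (fa_neg x) = fst x" "fst (fa_of_ohat a) = 1"
  by (simp_all add: fa_mult_def fa_add_def fa_neg_def fa_of_ohat_def)

lemma fa_val_simps [simp]:
  "fa_val (D, a) n = a n / of_nat D"
  "fa_val (fa_neg x) n = - fa_val x n"
  "fa_val (fa_of_ohat a) n = a n"
  "fst x > 0 \<Longrightarrow> fst y > 0 \<Longrightarrow> fa_val (fa_mult x y) n = fa_val x n * fa_val y n"
  "fst x > 0 \<Longrightarrow> fst y > 0 \<Longrightarrow> fa_val (fa_add x y) n = fa_val x n + fa_val y n"
  by (simp_all add: fa_val_def fa_neg_def fa_of_ohat_def fa_mult_def fa_add_def field_simps)

context imag_quadratic_field begin

lemma AfI [intro]: "D > 0 \<Longrightarrow> a \<in> Ohat K \<Longrightarrow> (D, a) \<in> Af K"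
  unfolding Af_def by blast

lemma AfE: assumes "x \<in> Af K" obtains D a where "x = (D, a)" "D > 0" "a \<in> Ohat K"
  using assms unfolding Af_def by blast

lemma Af_iff: "(D, a) \<in> Af K \<longleftrightarrow> D > 0 \<and> a \<in> Ohat K"
  unfolding Af_def by blast

lemma Af_fst_pos: "x \<in> Af K \<Longrightarrow> fst x > 0"
  by (auto elim: AfE)

lemma Af_snd: "x \<in> Af K \<Longrightarrow> snd x \<in> Ohat K"
  by (auto elim: AfE)

lemma Af_mult [simp, intro]: "x \<in> Af K \<Longrightarrow> y \<in> Af K \<Longrightarrow> fa_mult x y \<in> Af K"
  by (auto elim!: AfE simp: fa_mult_def intro!: Ohat_mult)

lemma Af_add [simp, intro]: "x \<in> Af K \<Longrightarrow> y \<in> Af K \<Longrightarrow> fa_add x y \<in> Af K"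
  by (auto elim!: AfE simp: fa_add_def intro!: Ohat_add Ohat_cmult)

lemma Af_neg [simp, intro]: "x \<in> Af K \<Longrightarrow> fa_neg x \<in> Af K"
  by (auto elim!: AfE simp: fa_neg_def intro!: Ohat_minus)

lemma Af_of_ohat [simp, intro]: "a \<in> Ohat K \<Longrightarrow> fa_of_ohat a \<in> Af K"
  by (auto simp: fa_of_ohat_def)

lemma fa_one_Af [simp]: "fa_one \<in> Af K"
  by (simp add: Af_iff)

lemma fa_minus_one_Af: "(1, \<lambda>n. - 1) \<in> Af K"
  by (simp add: Af_iff Ohat_const ring_of_integers_minus)

lemma fa_of_K_eq:
  assumes "k \<in> K"
  obtains d where "d > 0" "of_nat d * k \<in> \<O>" "fa_of_K K k = (d, \<lambda>n. of_nat d * k)"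
proof -
  have ex: "\<exists>d::nat. d > 0 \<and> of_nat d * k \<in> \<O>" using K_denominator[OF assms] by blast
  define d where "d = (LEAST d::nat. d > 0 \<and> of_nat d * k \<in> \<O>)"
  have "d > 0 \<and> of_nat d * k \<in> \<O>" unfolding d_def by (rule LeastI_ex[OF ex])
  moreover have "fa_of_K K k = (d, \<lambda>n. of_nat d * k)" unfolding fa_of_K_def d_def Let_def by simp
  ultimately show ?thesis using that by blast
qed

lemma Af_of_K [simp, intro]: "k \<in> K \<Longrightarrow> fa_of_K K k \<in> Af K"
  by (erule fa_of_K_eq) (auto intro: Ohat_const)

lemma fa_val_of_K [simp]: "k \<in> K \<Longrightarrow> fa_val (fa_of_K K k) n = k"
  by (erule fa_of_K_eq) simp

lemma fst_fa_of_K_pos [simp]: "k \<in> K \<Longrightarrow> fst (fa_of_K K k) > 0"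
  using Af_fst_pos[OF Af_of_K] .

lemma fa_eq_iff: "fa_eq K (D, a) (E, b) \<longleftrightarrow> ohat_eq K (\<lambda>n. of_nat E * a n) (\<lambda>n. of_nat D * b n)"
  unfolding fa_eq_def by simp

lemma fa_eq_pointwise:
  "fst x > 0 \<Longrightarrow> fst y > 0 \<Longrightarrow> (\<And>n. n > 0 \<Longrightarrow> fa_val x n = fa_val y n) \<Longrightarrow> fa_eq K x y"
  unfolding fa_eq_def by (rule ohat_eq_pointwise) (auto simp: fa_val_def field_simps)

lemma fa_eq_sym: "fa_eq K x y \<Longrightarrow> fa_eq K y x"
  unfolding fa_eq_def by (rule ohat_eq_sym)

lemma fa_eq_trans:
  assumes "x \<in> Af K" "y \<in> Af K" "z \<in> Af K" "fa_eq K x y" "fa_eq K y z"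
  shows "fa_eq K x z"
proof -
  obtain Dx a where x: "x = (Dx, a)" "Dx > 0" "a \<in> Ohat K" using assms(1) by (rule AfE)
  obtain Dy b where y: "y = (Dy, b)" "Dy > 0" "b \<in> Ohat K" using assms(2) by (rule AfE)
  obtain Dz c where z: "z = (Dz, c)" "Dz > 0" "c \<in> Ohat K" using assms(3) by (rule AfE)
  have xy: "ohat_eq K (\<lambda>n. of_nat Dy * a n) (\<lambda>n. of_nat Dx * b n)"
    and yz: "ohat_eq K (\<lambda>n. of_nat Dz * b n) (\<lambda>n. of_nat Dy * c n)"
    using assms(4,5) x y z by (simp_all add: fa_eq_iff)
  have "ohat_eq K (\<lambda>n. of_nat Dy * (of_nat Dz * a n)) (\<lambda>n. of_nat Dy * (of_nat Dx * c n))"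
  proof (rule ohat_eqI)
    fix n :: nat assume n: "n > 0"
    have "of_nat Dy * a n - of_nat Dx * b n \<in> scaleO K n" "of_nat Dz * b n - of_nat Dy * c n \<in> scaleO K n"
      using ohat_eqD[OF xy n] ohat_eqD[OF yz n] by simp_all
    hence "of_nat Dz * (of_nat Dy * a n - of_nat Dx * b n) + of_nat Dx * (of_nat Dz * b n - of_nat Dy * c n)
           \<in> scaleO K n"
      using n by (intro scaleO_add scaleO_mult) simp_all
    thus "of_nat Dy * (of_nat Dz * a n) - of_nat Dy * (of_nat Dx * c n) \<in> scaleO K n"
      by (simp add: algebra_simps)
  qed
  moreover have "(\<lambda>n. of_nat Dz * a n) \<in> Ohat K" "(\<lambda>n. of_nat Dx * c n) \<in> Ohat K"
    using x z by (simp_all add: Ohat_cmult)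
  ultimately have "ohat_eq K (\<lambda>n. of_nat Dz * a n) (\<lambda>n. of_nat Dx * c n)"
    using ohat_eq_cancel y(2) by blast
  thus ?thesis using x z by (simp add: fa_eq_iff)
qed

definition fa_null :: "fadele \<Rightarrow> bool" where
  "fa_null x \<longleftrightarrow> x \<in> Af K \<and> fa_eq K x fa_zero"

lemma fa_null_iff: "fa_null (D, a) \<longleftrightarrow> D > 0 \<and> a \<in> Ohat K \<and> ohat_eq K a (\<lambda>n. 0)"
  unfolding fa_null_def by (simp add: Af_iff fa_eq_iff)

lemma fa_null_add: assumes "fa_null x" "fa_null y" shows "fa_null (fa_add x y)"
proof -
  obtain D a where x: "x = (D, a)" "D > 0" "a \<in> Ohat K" "ohat_eq K a (\<lambda>n. 0)"
    using assms(1) by (metis fa_null_iff surj_pair)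
  obtain E b where y: "y = (E, b)" "E > 0" "b \<in> Ohat K" "ohat_eq K b (\<lambda>n. 0)"
    using assms(2) by (metis fa_null_iff surj_pair)
  have "ohat_eq K (\<lambda>n. of_nat E * a n + of_nat D * b n) (\<lambda>n. of_nat E * 0 + of_nat D * 0)"
    by (intro ohat_eq_add ohat_eq_cmult) (use x y in auto)
  thus ?thesis using x y by (simp add: fa_null_iff fa_add_def Ohat_add Ohat_cmult)
qed

lemma fa_null_mult: assumes "c \<in> Af K" "fa_null x" shows "fa_null (fa_mult c x)"
proof -
  obtain D a where x: "x = (D, a)" "D > 0" "a \<in> Ohat K" "ohat_eq K a (\<lambda>n. 0)"
    using assms(2) by (metis fa_null_iff surj_pair)
  obtain E b where c: "c = (E, b)" "E > 0" "b \<in> Ohat K" using assms(1) by (rule AfE)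
  have "ohat_eq K (\<lambda>n. b n * a n) (\<lambda>n. b n * 0)"
    by (rule ohat_eq_mult) (use x c in auto)
  thus ?thesis using x c by (simp add: fa_null_iff fa_mult_def Ohat_mult)
qed

lemma fa_null_pointwise_cong:
  assumes "fa_null x" "y \<in> Af K" "\<And>n. n > 0 \<Longrightarrow> fa_val y n = fa_val x n"
  shows "fa_null y"
proof -
  have "fa_eq K y x" using assms by (intro fa_eq_pointwise) (auto simp: Af_fst_pos fa_null_def)
  thus ?thesis using assms fa_eq_trans[of y x fa_zero] by (simp add: fa_null_def Af_iff)
qed

lemma fa_eq_iff_null_diff:
  assumes "x \<in> Af K" "y \<in> Af K" shows "fa_eq K x y \<longleftrightarrow> fa_null (fa_diff x y)"
proof -
  obtain D a where x: "x = (D, a)" "D > 0" "a \<in> Ohat K" using assms(1) by (rule AfE)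
  obtain E b where y: "y = (E, b)" "E > 0" "b \<in> Ohat K" using assms(2) by (rule AfE)
  have "(\<lambda>n. of_nat E * a n - of_nat D * b n) \<in> Ohat K"
    using x y by (intro Ohat_diff Ohat_cmult) auto
  thus ?thesis using x y
    by (simp add: fa_null_iff fa_add_def fa_neg_def fa_eq_iff ohat_eq_iff_diff[of "\<lambda>n. of_nat E * a n"])
qed

end

section \<open>Lattices \<open>s\<^sub>f Ohat \<inter> K\<close> and the map \<open>\<Theta>\<close>\<close>

context imag_quadratic_field begin

lemma Af_units_Af: "sf \<in> Af_units K \<Longrightarrow> sf \<in> Af K"
  by (simp add: Af_units_def)

lemma in_sOhatI:
  "sf \<in> Af K \<Longrightarrow> y \<in> Af K \<Longrightarrow> \<beta> \<in> Ohat K \<Longrightarrow> fa_null (fa_diff y (fa_mult sf (fa_of_ohat \<beta>)))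
   \<Longrightarrow> in_sOhat K sf y"
  unfolding in_sOhat_def by (subst (asm) fa_eq_iff_null_diff[symmetric]) auto

lemma in_sOhatE:
  assumes "in_sOhat K sf y" "sf \<in> Af K" "y \<in> Af K"
  obtains \<beta> where "\<beta> \<in> Ohat K" "fa_null (fa_diff y (fa_mult sf (fa_of_ohat \<beta>)))"
proof -
  obtain \<beta> where \<beta>: "\<beta> \<in> Ohat K" "fa_eq K y (fa_mult sf (fa_of_ohat \<beta>))"
    using assms(1) unfolding in_sOhat_def by blast
  thus ?thesis using that fa_eq_iff_null_diff assms(2,3) by blast
qed

lemma in_sOhat_pointwise_cong:
  assumes "in_sOhat K sf y" "sf \<in> Af K" "y \<in> Af K" "y' \<in> Af K"
    and "\<And>n. n > 0 \<Longrightarrow> fa_val y' n = fa_val y n"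
  shows "in_sOhat K sf y'"
proof -
  obtain \<beta> where \<beta>: "\<beta> \<in> Ohat K" "fa_null (fa_diff y (fa_mult sf (fa_of_ohat \<beta>)))"
    using in_sOhatE[OF assms(1-3)] .
  have "fa_null (fa_diff y' (fa_mult sf (fa_of_ohat \<beta>)))"
    by (rule fa_null_pointwise_cong[OF \<beta>(2)]) (use assms \<beta> in \<open>auto simp: Af_fst_pos\<close>)
  thus ?thesis using in_sOhatI assms \<beta> by blast
qed

text \<open>A finite idele \<open>s\<^sub>f\<close> has an inverse \<open>b / E\<close> with \<open>b \<in> Ohat K\<close>, so \<open>E = s\<^sub>f b \<in> s\<^sub>f Ohat K\<close>.\<close>
lemma Af_unit_contains_nat:
  assumes "sf \<in> Af_units K"
  obtains E \<gamma> where "E > 0" "\<gamma> \<in> Ohat K"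
    "fa_null (fa_diff (fa_of_ohat (\<lambda>n. of_nat E)) (fa_mult sf (fa_of_ohat \<gamma>)))"
proof -
  obtain y where y: "y \<in> Af K" "sf \<in> Af K" "fa_eq K (fa_mult sf y) fa_one"
    using assms unfolding Af_units_def by blast
  obtain D a where s: "sf = (D, a)" "D > 0" "a \<in> Ohat K" using y(2) by (rule AfE)
  obtain E b where yb: "y = (E, b)" "E > 0" "b \<in> Ohat K" using y(1) by (rule AfE)
  have "ohat_eq K (\<lambda>n. a n * b n) (\<lambda>n. of_nat (D * E))"
    using y(3) s yb by (simp add: fa_mult_def fa_eq_iff)
  hence "fa_eq K (fa_of_ohat (\<lambda>n. of_nat E)) (fa_mult sf (fa_of_ohat b))"
    using ohat_eq_sym s by (simp add: fa_eq_iff fa_of_ohat_def fa_mult_def algebra_simps)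
  hence "fa_null (fa_diff (fa_of_ohat (\<lambda>n. of_nat E)) (fa_mult sf (fa_of_ohat b)))"
    using fa_eq_iff_null_diff y(2) yb(3) by (simp add: Ohat_const)
  thus ?thesis using that yb by blast
qed

text \<open>Strong approximation. Writing \<open>u = \<gamma> / D\<close> with \<open>\<gamma> \<equiv> c + D M \<beta>\<close> (\<open>Ohat_decompose\<close>) gives \<open>l = c / D\<close>.\<close>
lemma K_dense_in_Af:
  assumes u: "u \<in> Af K" and M: "M > 0"
  obtains l \<delta> where "l \<in> K" "\<delta> \<in> Ohat K"
    "fa_null (fa_diff (fa_of_K K l) (fa_add u (fa_of_ohat (\<lambda>n. of_nat M * \<delta> n))))"
proof -
  obtain D \<gamma> where u_eq: "u = (D, \<gamma>)" "D > 0" "\<gamma> \<in> Ohat K" using u by (rule AfE)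
  obtain c \<beta> where c\<beta>: "c \<in> \<O>" "\<beta> \<in> Ohat K" "ohat_eq K \<gamma> (\<lambda>n. c + of_nat (D * M) * \<beta> n)"
    using Ohat_decompose[OF u_eq(3), of "D * M"] u_eq M by auto
  define \<delta> where "\<delta> = (\<lambda>n. - \<beta> n)"
  have \<delta>: "\<delta> \<in> Ohat K" unfolding \<delta>_def using c\<beta> by (simp add: Ohat_minus)
  have l: "c / of_nat D \<in> K" using c\<beta>(1) ring_of_integers_subset K_divide by simp
  have "(\<lambda>n. \<gamma> n - (c + of_nat (D * M) * \<beta> n)) \<in> Ohat K"
    using u_eq c\<beta> of_nat_in_ring_of_integers[of "D*M"]
    by (intro Ohat_diff Ohat_add Ohat_cmult Ohat_const) (auto simp del: of_nat_mult)
  hence null: "fa_null (D, \<lambda>n. \<gamma> n - (c + of_nat (D * M) * \<beta> n))"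
    using u_eq c\<beta> by (simp add: fa_null_iff flip: ohat_eq_iff_diff)
  have "fa_diff (fa_of_K K (c / of_nat D)) (fa_add u (fa_of_ohat (\<lambda>n. of_nat M * \<delta> n))) \<in> Af K"
    using l u \<delta> by (intro Af_add Af_neg Af_of_K Af_of_ohat Ohat_cmult) simp_all
  hence "fa_null (fa_diff (fa_of_K K (c / of_nat D)) (fa_add u (fa_of_ohat (\<lambda>n. of_nat M * \<delta> n))))"
    by (rule fa_null_pointwise_cong[OF fa_null_mult[OF fa_minus_one_Af null]])
      (use l u_eq in \<open>auto simp: \<delta>_def field_simps\<close>)
  thus ?thesis using that l \<delta> by blast
qed

lemma Lambda_iff: "l \<in> Lambda K (sf, z) \<longleftrightarrow> (\<exists>k \<in> K. in_sOhat K sf (fa_of_K K k) \<and> l = k / z)"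
  unfolding Lambda_def by auto

lemma Kspan_Lambda:
  assumes sf: "sf \<in> Af_units K" and z: "z \<noteq> 0"
  shows "Kspan K (Lambda K (sf, z)) = (\<lambda>k. k / z) ` K"
proof
  show "Kspan K (Lambda K (sf, z)) \<subseteq> (\<lambda>k. k / z) ` K"
  proof
    fix t assume "t \<in> Kspan K (Lambda K (sf, z))"
    then obtain k l where "k \<in> K" "l \<in> Lambda K (sf, z)" "t = k * l" unfolding Kspan_def by blast
    then obtain k' where "k' \<in> K" "t = k * k' / z" by (auto simp: Lambda_iff)
    thus "t \<in> (\<lambda>k. k / z) ` K" using \<open>k \<in> K\<close> K_mult by blast
  qed
next
  show "(\<lambda>k. k / z) ` K \<subseteq> Kspan K (Lambda K (sf, z))"
  proof
    fix t assume "t \<in> (\<lambda>k. k / z) ` K"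
    then obtain k where k: "k \<in> K" "t = k / z" by blast
    obtain E \<gamma> where E: "E > 0" "\<gamma> \<in> Ohat K"
      "fa_null (fa_diff (fa_of_ohat (\<lambda>n. of_nat E)) (fa_mult sf (fa_of_ohat \<gamma>)))"
      using Af_unit_contains_nat[OF sf] .
    have "in_sOhat K sf (fa_of_ohat (\<lambda>n. of_nat E))"
      using E sf by (intro in_sOhatI) (auto simp: Af_units_Af Ohat_const)
    hence "in_sOhat K sf (fa_of_K K (of_nat E))"
      by (rule in_sOhat_pointwise_cong) (use sf in \<open>auto simp: Af_units_Af Ohat_const\<close>)
    hence "of_nat E / z \<in> Lambda K (sf, z)" unfolding Lambda_iff by auto
    moreover have "k / of_nat E \<in> K" using k by (simp add: K_divide)
    moreover have "t = (k / of_nat E) * (of_nat E / z)" using E k by simp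
    ultimately show "t \<in> Kspan K (Lambda K (sf, z))" unfolding Kspan_def by blast
  qed
qed

lemma phi_rep_exists:
  assumes sf: "sf \<in> Af_units K" and \<rho>: "\<rho> \<in> Ohat K" and x: "x \<in> K"
  obtains k where "k \<in> K"
    "in_sOhat K sf (fa_diff (fa_of_K K k) (fa_mult (fa_mult sf (fa_of_ohat \<rho>)) (fa_of_K K x)))"
proof -
  have sf_Af: "sf \<in> Af K" using sf by (rule Af_units_Af)
  obtain E \<gamma> where E: "E > 0" "\<gamma> \<in> Ohat K"
    and E_null: "fa_null (fa_diff (fa_of_ohat (\<lambda>n. of_nat E)) (fa_mult sf (fa_of_ohat \<gamma>)))"
    using Af_unit_contains_nat[OF sf] .
  define u where "u = fa_mult (fa_mult sf (fa_of_ohat \<rho>)) (fa_of_K K x)"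
  have u: "u \<in> Af K" unfolding u_def using sf_Af \<rho> x by auto
  obtain l \<delta> where l: "l \<in> K" "\<delta> \<in> Ohat K"
    and l_null: "fa_null (fa_diff (fa_of_K K l) (fa_add u (fa_of_ohat (\<lambda>n. of_nat E * \<delta> n))))"
    using K_dense_in_Af[OF u E(1)] .
  have "in_sOhat K sf (fa_diff (fa_of_K K l) u)"
  proof (rule in_sOhatI[where \<beta> = "\<lambda>n. \<delta> n * \<gamma> n"])
    show "fa_null (fa_diff (fa_diff (fa_of_K K l) u) (fa_mult sf (fa_of_ohat (\<lambda>n. \<delta> n * \<gamma> n))))"
      by (rule fa_null_pointwise_cong[OF fa_null_add[OF l_null fa_null_mult[OF Af_of_ohat[OF l(2)] E_null]]])
        (use sf_Af u l E in \<open>auto simp: Af_fst_pos algebra_simps intro!: Ohat_mult\<close>)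
  qed (use sf_Af u l E in \<open>auto intro!: Ohat_mult\<close>)
  thus ?thesis using that l unfolding u_def by blast
qed

lemma fa_null_if_divisible:
  assumes T: "T \<in> Af K" and N: "N > 0"
    and div: "\<And>m. m > 0 \<Longrightarrow> \<exists>\<delta>\<in>Ohat K. fa_eq K (fa_mult T (fa_of_K K (1 / of_nat m))) (N, \<delta>)"
  shows "fa_null T"
proof -
  obtain E \<alpha> where T_eq: "T = (E, \<alpha>)" "E > 0" "\<alpha> \<in> Ohat K" using T by (rule AfE)
  have "ohat_eq K (\<lambda>n. of_nat N * \<alpha> n) (\<lambda>n. 0)"
  proof (rule ohat_eq_zero_if_divisible)
    fix m :: nat assume m: "m > 0"
    have m_K: "1 / of_nat m \<in> K" by (intro K_divide) (simp_all add: Rats_subset_K)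
    obtain \<delta> where \<delta>: "\<delta> \<in> Ohat K" "fa_eq K (fa_mult T (fa_of_K K (1 / of_nat m))) (N, \<delta>)"
      using div[OF m] by blast
    have "fa_eq K (E * m, \<alpha>) (fa_mult T (fa_of_K K (1 / of_nat m)))"
      by (rule fa_eq_pointwise) (use T_eq m m_K in auto)
    from fa_eq_trans[OF _ _ _ this \<delta>(2)] have "fa_eq K (E * m, \<alpha>) (N, \<delta>)"
      using T_eq m T N \<delta> m_K by (auto simp: Af_iff)
    hence "ohat_eq K (\<lambda>n. of_nat N * \<alpha> n) (\<lambda>n. of_nat m * (of_nat E * \<delta> n))"
      by (simp add: fa_eq_iff algebra_simps)
    thus "\<exists>\<delta>\<in>Ohat K. ohat_eq K (\<lambda>n. of_nat N * \<alpha> n) (\<lambda>n. of_nat m * \<delta> n)"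
      using \<delta>(1) by (intro bexI[of _ "\<lambda>n. of_nat E * \<delta> n"] Ohat_cmult) auto
  qed
  hence "ohat_eq K \<alpha> (\<lambda>n. 0)" by (rule ohat_eq_zero_cancel[OF T_eq(3) N])
  thus ?thesis using T_eq by (simp add: fa_null_iff)
qed

text \<open>Approximating \<open>s\<^sub>f \<beta>\<close> modulo \<open>E t Ohat\<close>, where \<open>E \<in> s\<^sub>f Ohat\<close>, lands in \<open>s\<^sub>f Ohat\<close>.\<close>
lemma K_approx_in_sOhat:
  assumes sf: "sf \<in> Af_units K" and \<beta>: "\<beta> \<in> Ohat K" and t: "t > 0"
  obtains l \<delta> where "l \<in> K" "\<delta> \<in> Ohat K" "in_sOhat K sf (fa_of_K K l)"
    "fa_null (fa_diff (fa_of_K K l) (fa_add (fa_mult sf (fa_of_ohat \<beta>)) (fa_of_ohat (\<lambda>n. of_nat t * \<delta> n))))"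
proof -
  have sf_Af: "sf \<in> Af K" using sf by (rule Af_units_Af)
  obtain E \<gamma> where E: "E > 0" "\<gamma> \<in> Ohat K"
    and E_null: "fa_null (fa_diff (fa_of_ohat (\<lambda>n. of_nat E)) (fa_mult sf (fa_of_ohat \<gamma>)))"
    using Af_unit_contains_nat[OF sf] .
  obtain l \<delta> where l: "l \<in> K" "\<delta> \<in> Ohat K"
    and l_null: "fa_null (fa_diff (fa_of_K K l) (fa_add (fa_mult sf (fa_of_ohat \<beta>)) (fa_of_ohat (\<lambda>n. of_nat (E * t) * \<delta> n))))"
    using K_dense_in_Af[OF _ mult_pos_pos[OF E(1) t], of "fa_mult sf (fa_of_ohat \<beta>)"] sf_Af \<beta> by auto
  have t\<delta>: "(\<lambda>n. of_nat t * \<delta> n) \<in> Ohat K" and E\<delta>: "(\<lambda>n. of_nat E * \<delta> n) \<in> Ohat K"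
    using l(2) by (simp_all add: Ohat_cmult)
  have \<beta>': "(\<lambda>n. \<beta> n + of_nat t * \<delta> n * \<gamma> n) \<in> Ohat K"
    using Ohat_add[OF \<beta> Ohat_mult[OF t\<delta> E(2)]] .
  have "fa_null (fa_diff (fa_of_K K l) (fa_mult sf (fa_of_ohat (\<lambda>n. \<beta> n + of_nat t * \<delta> n * \<gamma> n))))"
    by (rule fa_null_pointwise_cong[OF fa_null_add[OF l_null fa_null_mult[OF Af_of_ohat[OF t\<delta>] E_null]]])
      (use sf_Af l E \<beta> \<beta>' in \<open>auto simp: Af_fst_pos algebra_simps\<close>)
  hence "in_sOhat K sf (fa_of_K K l)"
    by (rule in_sOhatI[OF sf_Af Af_of_K[OF l(1)] \<beta>'])
  moreover have "fa_null (fa_diff (fa_of_K K l) (fa_add (fa_mult sf (fa_of_ohat \<beta>)) (fa_of_ohat (\<lambda>n. of_nat t * (of_nat E * \<delta> n)))))"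
    by (rule fa_null_pointwise_cong[OF l_null]) (use sf_Af l \<beta> Ohat_cmult[OF of_nat_in_ring_of_integers E\<delta>, of t] in
        \<open>auto simp: Af_fst_pos algebra_simps\<close>)
  ultimately show ?thesis using that l(1) E\<delta> by blast
qed

text \<open>The heart of commensurability: if \<open>\<rho>' s\<^sub>f' = k\<^sub>0 \<rho> s\<^sub>f\<close>, the two values \<open>k\<^sub>1, k\<^sub>2\<close>
  of \<open>\<phi>(x)\<close> satisfy \<open>k\<^sub>0 k\<^sub>1 - k\<^sub>2 \<in> k\<^sub>0 s\<^sub>f Ohat + s\<^sub>f' Ohat\<close>. To split this adelic
  decomposition into elements of \<open>K\<close>, approximate the first summand by \<open>l \<in> K\<close> modulo \<open>t Ohat\<close>,
  with \<open>t\<close> so divisible that \<open>k\<^sub>0 t Ohat \<subseteq> s\<^sub>f' Ohat\<close>.\<close>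
lemma phi_difference_split:
  assumes sf: "sf \<in> Af_units K" and sf': "sf' \<in> Af_units K"
    and \<rho>: "\<rho> \<in> Ohat K" and \<rho>': "\<rho>' \<in> Ohat K" and k0: "k0 \<in> K" and x: "x \<in> K"
    and Theta_null: "fa_null (fa_diff (fa_mult (fa_of_ohat \<rho>') sf') (fa_mult (fa_of_K K k0) (fa_mult (fa_of_ohat \<rho>) sf)))"
    and k1: "k1 \<in> K" "in_sOhat K sf (fa_diff (fa_of_K K k1) (fa_mult (fa_mult sf (fa_of_ohat \<rho>)) (fa_of_K K x)))"
    and k2: "k2 \<in> K" "in_sOhat K sf' (fa_diff (fa_of_K K k2) (fa_mult (fa_mult sf' (fa_of_ohat \<rho>')) (fa_of_K K x)))"
  obtains l l' where "l \<in> K" "in_sOhat K sf (fa_of_K K l)" "l' \<in> K" "in_sOhat K sf' (fa_of_K K l')"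
    "k0 * k1 - k2 = k0 * l + l'"
proof -
  have sf_Af: "sf \<in> Af K" and sf'_Af: "sf' \<in> Af K" using sf sf' by (auto simp: Af_units_Af)
  obtain E \<gamma> where E: "E > 0" "\<gamma> \<in> Ohat K"
    and E_null: "fa_null (fa_diff (fa_of_ohat (\<lambda>n. of_nat E)) (fa_mult sf' (fa_of_ohat \<gamma>)))"
    using Af_unit_contains_nat[OF sf'] .
  obtain e where e: "e > 0" "of_nat e * k0 \<in> \<O>" using K_denominator[OF k0] .
  obtain \<beta>1 where \<beta>1: "\<beta>1 \<in> Ohat K"
    and k1_null: "fa_null (fa_diff (fa_diff (fa_of_K K k1) (fa_mult (fa_mult sf (fa_of_ohat \<rho>)) (fa_of_K K x)))
              (fa_mult sf (fa_of_ohat \<beta>1)))"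
    using in_sOhatE[OF k1(2) sf_Af] sf_Af \<rho> x k1 by auto
  obtain \<beta>2 where \<beta>2: "\<beta>2 \<in> Ohat K"
    and k2_null: "fa_null (fa_diff (fa_diff (fa_of_K K k2) (fa_mult (fa_mult sf' (fa_of_ohat \<rho>')) (fa_of_K K x)))
              (fa_mult sf' (fa_of_ohat \<beta>2)))"
    using in_sOhatE[OF k2(2) sf'_Af] sf'_Af \<rho>' x k2 by auto
  obtain l \<delta> where l: "l \<in> K" "\<delta> \<in> Ohat K" "in_sOhat K sf (fa_of_K K l)"
    and l_null: "fa_null (fa_diff (fa_of_K K l) (fa_add (fa_mult sf (fa_of_ohat \<beta>1)) (fa_of_ohat (\<lambda>n. of_nat (E * e) * \<delta> n))))"
    using K_approx_in_sOhat[OF sf \<beta>1 mult_pos_pos[OF E(1) e(1)]] .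
  define l' where "l' = k0 * k1 - k2 - k0 * l"
  have l': "l' \<in> K" unfolding l'_def using k0 k1 k2 l by (intro K_diff K_mult) auto
  have c\<delta>: "(\<lambda>n. - (of_nat e * k0) * \<delta> n) \<in> Ohat K"
    using Ohat_cmult[OF ring_of_integers_minus[OF e(2)] l(2)] .
  have \<beta>': "(\<lambda>n. - \<beta>2 n - of_nat e * k0 * \<delta> n * \<gamma> n) \<in> Ohat K"
    using Ohat_add[OF Ohat_minus[OF \<beta>2] Ohat_mult[OF c\<delta> E(2)]] by simp
  note null = fa_null_add[OF fa_null_mult[OF Af_of_K[OF k0] k1_null]
    fa_null_add[OF fa_null_mult[OF fa_minus_one_Af k2_null]
    fa_null_add[OF fa_null_mult[OF Af_of_K[OF K_minus[OF k0]] l_null]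
    fa_null_add[OF fa_null_mult[OF Af_of_K[OF K_minus[OF x]] Theta_null]
                   fa_null_mult[OF Af_of_ohat[OF c\<delta>] E_null]]]]]
  have "fa_null (fa_diff (fa_of_K K l') (fa_mult sf' (fa_of_ohat (\<lambda>n. - \<beta>2 n - of_nat e * k0 * \<delta> n * \<gamma> n))))"
    by (rule fa_null_pointwise_cong[OF null])
      (use sf_Af sf'_Af l E \<beta>1 \<beta>2 \<beta>' k0 k1 k2 x \<rho> \<rho>' l' K_minus[OF k0] K_minus[OF x] in
        \<open>auto simp: Af_fst_pos algebra_simps l'_def\<close>)
  hence "in_sOhat K sf' (fa_of_K K l')"
    by (rule in_sOhatI[OF sf'_Af Af_of_K[OF l'] \<beta>'])
  thus ?thesis
    using that[OF l(1) l(3) l'] unfolding l'_def by simp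
qed

lemma image_divide_K_mult:
  assumes "k0 \<in> K" "k0 \<noteq> 0"
  shows "(\<lambda>k. k / z) ` K = (\<lambda>k. k / (k0 * z)) ` K"
proof (intro equalityI image_subsetI)
  fix a assume "a \<in> K"
  thus "a / z \<in> (\<lambda>k. k / (k0 * z)) ` K"
    using assms by (intro image_eqI[of _ _ "a * k0"] K_mult) auto
next
  fix a assume "a \<in> K"
  thus "a / (k0 * z) \<in> (\<lambda>k. k / z) ` K"
    using assms by (intro image_eqI[of _ _ "a / k0"] K_divide) auto
qed

lemma commensurable_if_Theta_eq:
  assumes \<rho>: "\<rho> \<in> Ohat K" and sf: "sf \<in> Af_units K" and z: "z \<noteq> 0"
    and \<rho>': "\<rho>' \<in> Ohat K" and sf': "sf' \<in> Af_units K" and z': "z' \<noteq> 0"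
    and Theta_eq: "modK_eq K (Theta (\<rho>, (sf, z))) (Theta (\<rho>', (sf', z')))"
  shows "commensurable K (\<rho>, (sf, z)) (\<rho>', (sf', z'))"
proof -
  have sf_Af: "sf \<in> Af K" and sf'_Af: "sf' \<in> Af K" using sf sf' by (auto simp: Af_units_Af)
  obtain k0 where k0: "k0 \<in> K" "k0 \<noteq> 0" and z'_eq: "z' = k0 * z"
    and "fa_eq K (fa_mult (fa_of_ohat \<rho>') sf') (fa_mult (fa_of_K K k0) (fa_mult (fa_of_ohat \<rho>) sf))"
    using Theta_eq unfolding modK_eq_def Theta_def by auto
  hence Theta_null:
    "fa_null (fa_diff (fa_mult (fa_of_ohat \<rho>') sf') (fa_mult (fa_of_K K k0) (fa_mult (fa_of_ohat \<rho>) sf)))"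
    using fa_eq_iff_null_diff sf_Af sf'_Af \<rho> \<rho>' by auto
  have "Kspan K (Lambda K (sf, z)) = Kspan K (Lambda K (sf', z'))"
    using Kspan_Lambda sf sf' z z' image_divide_K_mult[OF k0] z'_eq by simp
  moreover have "c1 - c2 \<in> setsum (Lambda K (sf, z)) (Lambda K (sf', z'))"
    if x: "x \<in> K" and phi1: "phi_rep K \<rho> (sf, z) x c1" and phi2: "phi_rep K \<rho>' (sf', z') x c2"
    for x c1 c2
  proof -
    obtain k1 where k1: "k1 \<in> K" "c1 = k1 / z"
      "in_sOhat K sf (fa_diff (fa_of_K K k1) (fa_mult (fa_mult sf (fa_of_ohat \<rho>)) (fa_of_K K x)))"
      using phi1 unfolding phi_rep_def by auto
    obtain k2 where k2: "k2 \<in> K" "c2 = k2 / z'"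
      "in_sOhat K sf' (fa_diff (fa_of_K K k2) (fa_mult (fa_mult sf' (fa_of_ohat \<rho>')) (fa_of_K K x)))"
      using phi2 unfolding phi_rep_def by auto
    obtain l l' where l: "l \<in> K" "in_sOhat K sf (fa_of_K K l)"
      and l': "l' \<in> K" "in_sOhat K sf' (fa_of_K K l')" and split: "k0 * k1 - k2 = k0 * l + l'"
      using phi_difference_split[OF sf sf' \<rho> \<rho>' k0(1) x Theta_null k1(1,3) k2(1,3)] .
    have "c1 - c2 = (k0 * k1 - k2) / z'"
      using k1(2) k2(2) z'_eq k0 z by (simp add: field_simps)
    also have "\<dots> = l / z + l' / z'"
      using split z'_eq k0 z by (simp add: add_divide_distrib)
    finally show ?thesis using l l' unfolding setsum_def Lambda_iff by blast
  qed
  ultimately show ?thesis unfolding commensurable_def by auto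
qed

lemma commensurable_phi_relation:
  assumes \<rho>: "\<rho> \<in> Ohat K" and sf: "sf \<in> Af_units K" and z: "z \<noteq> 0"
    and \<rho>': "\<rho>' \<in> Ohat K" and sf': "sf' \<in> Af_units K"
    and \<kappa>: "\<kappa> \<in> K" "\<kappa> \<noteq> 0" and comm: "commensurable K (\<rho>, (sf, z)) (\<rho>', (sf', \<kappa> * z))"
    and x: "x \<in> K"
  obtains k1 k2 l1 l2 where
    "k1 \<in> K" "in_sOhat K sf (fa_diff (fa_of_K K k1) (fa_mult (fa_mult sf (fa_of_ohat \<rho>)) (fa_of_K K x)))"
    "k2 \<in> K" "in_sOhat K sf' (fa_diff (fa_of_K K k2) (fa_mult (fa_mult sf' (fa_of_ohat \<rho>')) (fa_of_K K x)))"
    "l1 \<in> K" "in_sOhat K sf (fa_of_K K l1)" "l2 \<in> K" "in_sOhat K sf' (fa_of_K K l2)"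
    "\<kappa> * k1 - k2 = \<kappa> * l1 + l2"
proof -
  obtain k1 where k1: "k1 \<in> K"
    "in_sOhat K sf (fa_diff (fa_of_K K k1) (fa_mult (fa_mult sf (fa_of_ohat \<rho>)) (fa_of_K K x)))"
    using phi_rep_exists[OF sf \<rho> x] .
  obtain k2 where k2: "k2 \<in> K"
    "in_sOhat K sf' (fa_diff (fa_of_K K k2) (fa_mult (fa_mult sf' (fa_of_ohat \<rho>')) (fa_of_K K x)))"
    using phi_rep_exists[OF sf' \<rho>' x] .
  have "phi_rep K \<rho> (sf, z) x (k1 / z)" "phi_rep K \<rho>' (sf', \<kappa> * z) x (k2 / (\<kappa> * z))"
    unfolding phi_rep_def using k1 k2 by auto
  hence "k1 / z - k2 / (\<kappa> * z) \<in> setsum (Lambda K (sf, z)) (Lambda K (sf', \<kappa> * z))"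
    using comm x unfolding commensurable_def by auto
  then obtain l1 l2 where l1: "l1 \<in> K" "in_sOhat K sf (fa_of_K K l1)"
    and l2: "l2 \<in> K" "in_sOhat K sf' (fa_of_K K l2)"
    and "k1 / z - k2 / (\<kappa> * z) = l1 / z + l2 / (\<kappa> * z)"
    unfolding setsum_def Lambda_iff by blast
  hence "\<kappa> * k1 - k2 = \<kappa> * l1 + l2"
    using z \<kappa> by (simp add: field_simps)
  thus ?thesis using that k1 k2 l1 l2 by blast
qed

text \<open>If the lattices are commensurable, then for every \<open>x \<in> K\<close> the relation above puts
  \<open>(\<kappa> \<rho> s\<^sub>f - \<rho>' s\<^sub>f') x\<close> into \<open>\<kappa> s\<^sub>f Ohat + s\<^sub>f' Ohat\<close>, whose denominators are bounded
  independently of \<open>x\<close>.\<close>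
lemma Theta_diff_mult_bounded_denominator:
  assumes \<rho>: "\<rho> \<in> Ohat K" and sf: "sf \<in> Af_units K" and z: "z \<noteq> 0"
    and \<rho>': "\<rho>' \<in> Ohat K" and sf': "sf' \<in> Af_units K"
    and \<kappa>: "\<kappa> \<in> K" "\<kappa> \<noteq> 0" and comm: "commensurable K (\<rho>, (sf, z)) (\<rho>', (sf', \<kappa> * z))"
    and x: "x \<in> K"
  shows "\<exists>\<delta>\<in>Ohat K. fa_eq K
    (fa_mult (fa_diff (fa_mult (fa_of_K K \<kappa>) (fa_mult (fa_of_ohat \<rho>) sf)) (fa_mult (fa_of_ohat \<rho>') sf')) (fa_of_K K x))
    (fst (fa_of_K K \<kappa>) * fst sf * fst sf', \<delta>)"
proof -
  have sf_Af: "sf \<in> Af K" and sf'_Af: "sf' \<in> Af K" using sf sf' by (auto simp: Af_units_Af)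
  obtain k1 k2 l1 l2 where
    k1: "k1 \<in> K" "in_sOhat K sf (fa_diff (fa_of_K K k1) (fa_mult (fa_mult sf (fa_of_ohat \<rho>)) (fa_of_K K x)))"
    and k2: "k2 \<in> K" "in_sOhat K sf' (fa_diff (fa_of_K K k2) (fa_mult (fa_mult sf' (fa_of_ohat \<rho>')) (fa_of_K K x)))"
    and l1: "l1 \<in> K" "in_sOhat K sf (fa_of_K K l1)" and l2: "l2 \<in> K" "in_sOhat K sf' (fa_of_K K l2)"
    and rel: "\<kappa> * k1 - k2 = \<kappa> * l1 + l2"
    using commensurable_phi_relation[OF \<rho> sf z \<rho>' sf' \<kappa> comm x] .
  obtain \<beta>1 where \<beta>1: "\<beta>1 \<in> Ohat K"
    and k1_null: "fa_null (fa_diff (fa_diff (fa_of_K K k1) (fa_mult (fa_mult sf (fa_of_ohat \<rho>)) (fa_of_K K x)))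
              (fa_mult sf (fa_of_ohat \<beta>1)))"
    using in_sOhatE[OF k1(2) sf_Af] sf_Af \<rho> x k1 by auto
  obtain \<beta>2 where \<beta>2: "\<beta>2 \<in> Ohat K"
    and k2_null: "fa_null (fa_diff (fa_diff (fa_of_K K k2) (fa_mult (fa_mult sf' (fa_of_ohat \<rho>')) (fa_of_K K x)))
              (fa_mult sf' (fa_of_ohat \<beta>2)))"
    using in_sOhatE[OF k2(2) sf'_Af] sf'_Af \<rho>' x k2 by auto
  obtain \<gamma>1 where \<gamma>1: "\<gamma>1 \<in> Ohat K"
    and l1_null: "fa_null (fa_diff (fa_of_K K l1) (fa_mult sf (fa_of_ohat \<gamma>1)))"
    using in_sOhatE[OF l1(2) sf_Af] l1 by auto
  obtain \<gamma>2 where \<gamma>2: "\<gamma>2 \<in> Ohat K"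
    and l2_null: "fa_null (fa_diff (fa_of_K K l2) (fa_mult sf' (fa_of_ohat \<gamma>2)))"
    using in_sOhatE[OF l2(2) sf'_Af] l2 by auto
  define S where "S = fa_add (fa_mult (fa_mult (fa_of_K K \<kappa>) sf) (fa_of_ohat (\<lambda>n. \<gamma>1 n - \<beta>1 n)))
                             (fa_mult sf' (fa_of_ohat (\<lambda>n. \<gamma>2 n + \<beta>2 n)))"
  have S: "S \<in> Af K" unfolding S_def using \<kappa> sf_Af sf'_Af \<beta>1 \<beta>2 \<gamma>1 \<gamma>2 by (auto intro!: Ohat_diff Ohat_add)
  note null = fa_null_add[OF fa_null_mult[OF Af_of_K[OF K_minus[OF \<kappa>(1)]] k1_null]
    fa_null_add[OF k2_null fa_null_add[OF fa_null_mult[OF Af_of_K[OF \<kappa>(1)] l1_null] l2_null]]]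
  have "fa_null (fa_diff (fa_mult (fa_diff (fa_mult (fa_of_K K \<kappa>) (fa_mult (fa_of_ohat \<rho>) sf))
      (fa_mult (fa_of_ohat \<rho>') sf')) (fa_of_K K x)) S)"
    by (rule fa_null_pointwise_cong[OF null])
      (use sf_Af sf'_Af \<beta>1 \<beta>2 \<gamma>1 \<gamma>2 k1 k2 l1 l2 x \<rho> \<rho>' \<kappa> K_minus[OF \<kappa>(1)] rel S in
        \<open>auto simp: Af_fst_pos algebra_simps S_def\<close>)
  hence "fa_eq K (fa_mult (fa_diff (fa_mult (fa_of_K K \<kappa>) (fa_mult (fa_of_ohat \<rho>) sf))
      (fa_mult (fa_of_ohat \<rho>') sf')) (fa_of_K K x)) S"
    using fa_eq_iff_null_diff S sf_Af sf'_Af \<rho> \<rho>' \<kappa> x by auto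
  moreover have "S = (fst (fa_of_K K \<kappa>) * fst sf * fst sf', snd S)"
    unfolding S_def by (simp add: prod_eq_iff)
  ultimately show ?thesis using Af_snd[OF S] by metis
qed

lemma Theta_eq_if_commensurable:
  assumes \<rho>: "\<rho> \<in> Ohat K" and sf: "sf \<in> Af_units K" and z: "z \<noteq> 0"
    and \<rho>': "\<rho>' \<in> Ohat K" and sf': "sf' \<in> Af_units K" and z': "z' \<noteq> 0"
    and comm: "commensurable K (\<rho>, (sf, z)) (\<rho>', (sf', z'))"
  shows "modK_eq K (Theta (\<rho>, (sf, z))) (Theta (\<rho>', (sf', z')))"
proof -
  have sf_Af: "sf \<in> Af K" and sf'_Af: "sf' \<in> Af K" using sf sf' by (auto simp: Af_units_Af)
  have "(\<lambda>k. k / z) ` K = (\<lambda>k. k / z') ` K"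
    using comm Kspan_Lambda sf sf' z z' unfolding commensurable_def by simp
  then obtain k where "k \<in> K" "1 / z = k / z'"
    by (metis K_of_nat image_iff of_nat_1)
  define \<kappa> where "\<kappa> = z' / z"
  have \<kappa>: "\<kappa> \<in> K" "\<kappa> \<noteq> 0" and z'_eq: "z' = \<kappa> * z"
    using \<open>k \<in> K\<close> \<open>1 / z = k / z'\<close> z z' unfolding \<kappa>_def by (auto simp: field_simps)
  define T where "T = fa_diff (fa_mult (fa_of_K K \<kappa>) (fa_mult (fa_of_ohat \<rho>) sf)) (fa_mult (fa_of_ohat \<rho>') sf')"
  have T: "T \<in> Af K" unfolding T_def using \<kappa> \<rho> \<rho>' sf_Af sf'_Af by auto
  have "fa_null T"
  proof (rule fa_null_if_divisible[OF T])
    show "fst (fa_of_K K \<kappa>) * fst sf * fst sf' > 0" using \<kappa> sf_Af sf'_Af by (simp add: Af_fst_pos)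
    fix m :: nat assume "m > 0"
    have "1 / of_nat m \<in> K" by (intro K_divide) (simp_all add: Rats_subset_K)
    thus "\<exists>\<delta>\<in>Ohat K. fa_eq K (fa_mult T (fa_of_K K (1 / of_nat m))) (fst (fa_of_K K \<kappa>) * fst sf * fst sf', \<delta>)"
      using Theta_diff_mult_bounded_denominator[OF \<rho> sf z \<rho>' sf' \<kappa>] comm z'_eq unfolding T_def by blast
  qed
  hence "fa_eq K (fa_mult (fa_of_K K \<kappa>) (fa_mult (fa_of_ohat \<rho>) sf)) (fa_mult (fa_of_ohat \<rho>') sf')"
    using fa_eq_iff_null_diff \<kappa> \<rho> \<rho>' sf_Af sf'_Af unfolding T_def by auto
  hence "fa_eq K (fa_mult (fa_of_ohat \<rho>') sf') (fa_mult (fa_of_K K \<kappa>) (fa_mult (fa_of_ohat \<rho>) sf))"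
    by (rule fa_eq_sym)
  thus ?thesis unfolding modK_eq_def Theta_def using \<kappa> z'_eq by auto
qed

lemma Theta_respects_klat_eq:
  assumes \<rho>: "\<rho> \<in> Ohat K" and sf: "sf \<in> Af_units K"
    and \<rho>': "\<rho>' \<in> Ohat K" and sf': "sf' \<in> Af_units K"
    and eq: "klat_eq K (\<rho>, (sf, z)) (\<rho>', (sf', z'))"
  shows "modK_eq K (Theta (\<rho>, (sf, z))) (Theta (\<rho>', (sf', z')))"
proof -
  have sf_Af: "sf \<in> Af K" and sf'_Af: "sf' \<in> Af K" using sf sf' by (auto simp: Af_units_Af)
  obtain x y where x: "x \<in> Ohat K" and y: "y \<in> Ohat K" and xy: "ohat_eq K (\<lambda>n. x n * y n) (\<lambda>n. 1)"
    and \<rho>'_eq: "ohat_eq K \<rho>' (\<lambda>n. y n * \<rho> n)"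
    and s'_eq: "modK_eq K (fa_mult (fa_of_ohat x) sf, z) (sf', z')"
    using eq unfolding klat_eq_def by auto
  obtain k where k: "k \<in> K" "k \<noteq> 0" "z' = k * z"
    and sf'_eq: "fa_eq K sf' (fa_mult (fa_of_K K k) (fa_mult (fa_of_ohat x) sf))"
    using s'_eq unfolding modK_eq_def by auto
  have y\<rho>: "(\<lambda>n. y n * \<rho> n) \<in> Ohat K" and xy_Ohat: "(\<lambda>n. x n * y n) \<in> Ohat K"
    using x y \<rho> by (auto intro: Ohat_mult)
  have "fa_eq K (fa_of_ohat \<rho>') (fa_of_ohat (\<lambda>n. y n * \<rho> n))"
    using \<rho>'_eq by (simp add: fa_eq_def fa_of_ohat_def)
  hence null_\<rho>: "fa_null (fa_diff (fa_of_ohat \<rho>') (fa_of_ohat (\<lambda>n. y n * \<rho> n)))"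
    using fa_eq_iff_null_diff \<rho>' y\<rho> by auto
  have null_sf: "fa_null (fa_diff sf' (fa_mult (fa_of_K K k) (fa_mult (fa_of_ohat x) sf)))"
    using sf'_eq fa_eq_iff_null_diff k sf_Af sf'_Af x by auto
  have "fa_eq K (fa_of_ohat (\<lambda>n. x n * y n)) fa_one"
    using xy by (simp add: fa_eq_def fa_of_ohat_def)
  hence null_xy: "fa_null (fa_diff (fa_of_ohat (\<lambda>n. x n * y n)) fa_one)"
    using fa_eq_iff_null_diff xy_Ohat fa_one_Af Af_of_ohat by blast
  note null = fa_null_add[OF fa_null_mult[OF sf'_Af null_\<rho>]
    fa_null_add[OF fa_null_mult[OF Af_of_ohat[OF y\<rho>] null_sf]
      fa_null_mult[OF Af_mult[OF Af_of_K[OF k(1)] Af_mult[OF Af_of_ohat[OF \<rho>] sf_Af]] null_xy]]]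
  have "fa_null (fa_diff (fa_mult (fa_of_ohat \<rho>') sf') (fa_mult (fa_of_K K k) (fa_mult (fa_of_ohat \<rho>) sf)))"
    by (rule fa_null_pointwise_cong[OF null])
      (use sf_Af sf'_Af \<rho> \<rho>' x y k in \<open>auto simp: Af_fst_pos algebra_simps\<close>)
  hence "fa_eq K (fa_mult (fa_of_ohat \<rho>') sf') (fa_mult (fa_of_K K k) (fa_mult (fa_of_ohat \<rho>) sf))"
    using fa_eq_iff_null_diff k \<rho> \<rho>' sf_Af sf'_Af by auto
  thus ?thesis unfolding modK_eq_def Theta_def using k by auto
qed

lemma Theta_in_Adot: "p \<in> klattices K \<Longrightarrow> Theta p \<in> Adot K"
  unfolding klattices_def ideles_def Adot_def Theta_def by (auto simp: Af_units_Af)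

lemma Theta_surj: "y \<in> Adot K \<Longrightarrow> \<exists>p \<in> klattices K. modK_eq K (Theta p) y"
proof -
  assume "y \<in> Adot K"
  then obtain D \<alpha> z where y: "y = ((D, \<alpha>), z)" "D > 0" "\<alpha> \<in> Ohat K" "z \<noteq> 0"
    unfolding Adot_def by (auto elim!: AfE)
  have "(D, \<lambda>n. 1) \<in> Af_units K"
    unfolding Af_units_def
  proof (intro CollectI conjI bexI)
    show "(D, \<lambda>n. 1) \<in> Af K" "(1, \<lambda>n. of_nat D) \<in> Af K" using y by (simp_all add: Af_iff Ohat_const)
    show "fa_eq K (fa_mult (D, \<lambda>n. 1) (1, \<lambda>n. of_nat D)) fa_one"
      by (rule fa_eq_pointwise) (use y in \<open>simp_all add: fa_mult_def\<close>)
  qed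
  hence "(\<alpha>, ((D, \<lambda>n. 1), z)) \<in> klattices K" unfolding klattices_def ideles_def using y by auto
  moreover have "modK_eq K (Theta (\<alpha>, ((D, \<lambda>n. 1), z))) y"
    unfolding modK_eq_def Theta_def y(1)
    by (rule bexI[of _ 1]) (use y in \<open>auto intro!: fa_eq_pointwise simp: Rats_subset_K\<close>)
  ultimately show ?thesis by blast
qed

end

theorem mainTheorem6:
  fixes K :: "complex set"
  assumes "imag_quadratic K"
  shows "(\<forall>p \<in> klattices K. \<forall>q \<in> klattices K.
            klat_eq K p q \<longrightarrow> modK_eq K (Theta p) (Theta q))
       \<and> (\<forall>p \<in> klattices K. Theta p \<in> Adot K)
       \<and> (\<forall>y \<in> Adot K. \<exists>p \<in> klattices K. modK_eq K (Theta p) y)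
       \<and> (\<forall>p \<in> klattices K. \<forall>q \<in> klattices K.
            modK_eq K (Theta p) (Theta q) \<longleftrightarrow> commensurable K p q)"
proof -
  obtain \<omega> where "imag_quadratic_field K \<omega>"
    using assms unfolding imag_quadratic_def imag_quadratic_field_def by blast
  then interpret imag_quadratic_field K \<omega> .
  have "klat_eq K p q \<longrightarrow> modK_eq K (Theta p) (Theta q)"
    and "modK_eq K (Theta p) (Theta q) \<longleftrightarrow> commensurable K p q"
    if "p \<in> klattices K" "q \<in> klattices K" for p q
    using that Theta_respects_klat_eq commensurable_if_Theta_eq Theta_eq_if_commensurable
    unfolding klattices_def ideles_def by auto
  thus ?thesis using Theta_in_Adot Theta_surj by blast
qed

end
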